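(* In the D-RR setting under the strongly convex assumptions, let $\alpha_t=\alpha$ for all $t$, where $\alpha>0$ satisfies $$\alpha\le\min\Big\{\sqrt{\frac{2-\rho_w^2}{24\rho_w^2(5-\rho_w^2)}}\frac{1-\rho_w^2}{L},\ \frac{1-\rho_w^2}{2\mu},\ \frac{(1-\rho_w^2)\mu}{8\sqrt{30}L^2}\Big\}$$ (first term $=+\infty$ if $\rho_w=0$). Then for all $t\ge0$, $$\frac1n\sum_{i=1}^n\mathbb{E}\|x_{i,t}^0-x^*\|^2\le\Big(1-\frac{\alpha\mu}{4}\Big)^{mt}H_0+\frac{4\alpha^2}{\mu}\Big(mL+\frac{240\rho_w^2L^2}{\mu(1-\rho_w^2)^2}\Big)\sigma_*^2+\Big(\frac{1+\rho_w^2}{2}\Big)^{mt}\frac{\|\mathbf x_0^0-\mathbf 1(\bar x_0^0)^\intercal\|^2}{n}+\frac{4\hat X_1}{n(1-\rho_w^2)^2}\alpha^2 .$$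
   Context: D-RR setting. Let $n,m,p\ge1$ be integers and $[k]=\{1,\dots,k\}$. For $i\in[n]$, $\ell\in[m]$ let $f_{i,\ell}:\mathbb{R}^p\to\mathbb{R}$ be differentiable; $f_i:=\frac1m\sum_{\ell=1}^m f_{i,\ell}$, $f:=\frac1n\sum_{i=1}^n f_i$. Let $W=(w_{ij})\in\mathbb{R}^{n\times n}$ be nonnegative, symmetric, with $W\mathbf 1=\mathbf 1$, compliant with an undirected connected graph on $[n]$ (for $i\ne j$, $w_{ij}>0$ iff $\{i,j\}$ is an edge); $\rho_w$ is the spectral norm of $W-\frac1n\mathbf 1\mathbf 1^\intercal$ (so $\rho_w<1$). The D-RR algorithm: given deterministic initial points $x_{i,0}\in\mathbb{R}^p$ and stepsizes $\alpha_t>0$, at each epoch $t=0,1,\dots$ each agent $i$ draws a permutation $(\pi^i_0,\dots,\pi^i_{m-1})$ of $[m]$ uniformly at random, independently across agents and epochs; sets $x^0_{i,t}=x_{i,t}$; for $\ell=0,\dots,m-1$ sets $x^{\ell+1}_{i,t}=\sum_{j=1}^n w_{ij}\big(x^\ell_{j,t}-\alpha_t\nabla f_{j,\pi^j_\ell}(x^\ell_{j,t})\big)$; sets $x_{i,t+1}=x^m_{i,t}$. Notation: $\mathbf{x}_t^\ell\in\mathbb{R}^{n\times p}$ has $i$-th row $(x^\ell_{i,t})^\intercal$; $\bar x_t^\ell=\frac1n\sum_i x^\ell_{i,t}$; $\mathbf 1(\bar x_t^\ell)^\intercal$ is the $n\times p$ matrix all of whose rows equal $(\bar x_t^\ell)^\intercal$;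 $\|\cdot\|$ is Euclidean/Frobenius norm; $\mathbb{E}$ is expectation over all permutations. Strongly convex assumptions: each $f_{i,\ell}$ is $\mu$-strongly convex with $L$-Lipschitz gradient ($0<\mu\le L$); $x^*$ is the unique minimizer of $f$; $\sigma_*^2:=\frac{1}{mn}\sum_{i,\ell}\|\nabla f_{i,\ell}(x^* )\|^2$. $\omega:=\frac{16\alpha L^2}{n\mu(1-\rho_w^2)}$, $H_0:=\|\bar x_0^0-x^*\|^2+\omega\|\mathbf x_0^0-\mathbf 1(\bar x_0^0)^\intercal\|^2$, $\hat X_0:=H_0+\frac{28(m\mu+L)\sigma_*^2}{\mu L^2}$, $\hat X_1:=\frac{30nL^2}{1-\rho_w^2}\hat X_0+\frac{15n\rho_w^2}{1-\rho_w^2}\sigma_*^2+\frac{mn\mu(1-\rho_w^2)}{8L}\sigma_*^2$. *)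

theory Defs
  imports "HOL-Analysis.Analysis"
begin

definition strongly_convex :: "real \<Rightarrow> ('a::real_inner \<Rightarrow> real) \<Rightarrow> bool" where
  "strongly_convex \<mu> f \<longleftrightarrow> convex_on UNIV (\<lambda>x. f x - \<mu> / 2 * (norm x)^2)"

(* Spectral norm of W - (1/n) 1 1^T, agents indexed by the finite type 'n, n = CARD('n) *)
definition rho_w :: "real^'n::finite^'n \<Rightarrow> real" where
  "rho_w W = onorm (\<lambda>v. (W - (\<chi> i j. 1 / real CARD('n))) *v v)"

definition mixing_graph_connected :: "real^'n::finite^'n \<Rightarrow> bool" where
  "mixing_graph_connected W \<longleftrightarrow>
     (\<forall>i j. (\<lambda>a b. a \<noteq> b \<and> W$a$b > 0)\<^sup>*\<^sup>* i j)"

(* Inner loop of one D-RR epoch: l steps starting from X, with permutations pi (agent => position => index) *)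
fun drr_inner :: "real^'n::finite^'n \<Rightarrow> real \<Rightarrow> ('n \<Rightarrow> nat \<Rightarrow> 'a::real_vector \<Rightarrow> 'a)
     \<Rightarrow> ('n \<Rightarrow> nat \<Rightarrow> nat) \<Rightarrow> ('n \<Rightarrow> 'a) \<Rightarrow> nat \<Rightarrow> ('n \<Rightarrow> 'a)" where
  "drr_inner W \<alpha> g \<pi> X 0 = X"
| "drr_inner W \<alpha> g \<pi> X (Suc l) =
     (let Y = drr_inner W \<alpha> g \<pi> X l in
      (\<lambda>i. \<Sum>j\<in>UNIV. (W$i$j) *\<^sub>R (Y j - \<alpha> *\<^sub>R g j (\<pi> j l) (Y j))))"

(* Outer iterates x_t = x_t^0, with sigma t i the permutation of agent i at epoch t *)
fun drr_iter :: "real^'n::finite^'n \<Rightarrow> real \<Rightarrow> ('n \<Rightarrow> nat \<Rightarrow> 'a::real_vector \<Rightarrow> 'a) \<Rightarrow> nat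
     \<Rightarrow> (nat \<Rightarrow> 'n \<Rightarrow> nat \<Rightarrow> nat) \<Rightarrow> ('n \<Rightarrow> 'a) \<Rightarrow> nat \<Rightarrow> ('n \<Rightarrow> 'a)" where
  "drr_iter W \<alpha> g m \<sigma> x0 0 = x0"
| "drr_iter W \<alpha> g m \<sigma> x0 (Suc t) = drr_inner W \<alpha> g (\<sigma> t) (drr_iter W \<alpha> g m \<sigma> x0 t) m"

(* All permutation choices for epochs < t (canonically id elsewhere); uniform distribution on this
   finite set = independent uniform permutations across agents and epochs *)
definition schedules :: "nat \<Rightarrow> nat \<Rightarrow> (nat \<Rightarrow> 'n::finite \<Rightarrow> nat \<Rightarrow> nat) set" where
  "schedules m t = {\<sigma>. \<forall>e i. (e < t \<longrightarrow> \<sigma> e i permutes {..<m}) \<and> (\<not> e < t \<longrightarrow> \<sigma> e i = id)}"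

definition expect_sched :: "nat \<Rightarrow> nat \<Rightarrow> ((nat \<Rightarrow> 'n::finite \<Rightarrow> nat \<Rightarrow> nat) \<Rightarrow> real) \<Rightarrow> real" where
  "expect_sched m t h = (\<Sum>\<sigma>\<in>(schedules m t :: (nat \<Rightarrow> 'n \<Rightarrow> nat \<Rightarrow> nat) set). h \<sigma>) / real (card (schedules m t :: (nat \<Rightarrow> 'n \<Rightarrow> nat \<Rightarrow> nat) set))"

definition avg_pt :: "('n::finite \<Rightarrow> 'a::real_vector) \<Rightarrow> 'a" where
  "avg_pt X = (1 / real CARD('n)) *\<^sub>R (\<Sum>i\<in>UNIV. X i)"

definition consensus_err :: "('n::finite \<Rightarrow> 'a::real_normed_vector) \<Rightarrow> real" where
  "consensus_err X = (\<Sum>i\<in>UNIV. (norm (X i - avg_pt X))^2)"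

end

theory Submission
  imports Defs
begin

(*
  One epoch of D-RR is tracked by the Lyapunov function |avg - y|^2 + w * (consensus error) / n,
  where the reference point y starts at xstar and takes the same steps as the average of the agents,
  but with every component gradient evaluated at xstar; since these gradients sum to zero, y is back
  at xstar after a full epoch. In a local step, strong convexity and smoothness contract the
  distance between the average and y, while mixing contracts the consensus error by rho_w^2; with
  the weight w = 16 alpha L^2 / (mu (1 - rho_w^2)) the two coupled recursions combine into a
  contraction by 1 - alpha mu / 2 up to noise terms. Averaged over the random permutations, the
  drift of y is a sum of samples drawn without replacement, whose mean square is at most alpha^2 m
  sigma_*^2. Iterating over the epochs, the expected Lyapunov function and the expected consensus
  error decay geometrically to floors of order alpha^2, and together they bound the mean squared
  distance of the agents to xstar.
*)

section \<open>Averages and consensus error\<close>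

lemma sum_diff_avg_pt: "(\<Sum>i\<in>UNIV. X i - avg_pt (X :: 'n::finite \<Rightarrow> 'a::real_vector)) = 0"
proof -
  have "(\<Sum>i\<in>UNIV. X i - avg_pt X) = (\<Sum>i\<in>UNIV. X i) - real CARD('n) *\<^sub>R avg_pt X"
    by (simp add: sum_subtractf sum_constant_scaleR)
  then show ?thesis unfolding avg_pt_def by simp
qed

lemma avg_pt_diff: "avg_pt (\<lambda>i. X i - Y i) = avg_pt X - avg_pt (Y :: 'n::finite \<Rightarrow> 'a::real_vector)"
  unfolding avg_pt_def by (simp add: sum_subtractf scaleR_diff_right)

lemma power2_norm_add: "(norm (u + v))^2 = (norm u)^2 + 2 * (u \<bullet> v) + (norm (v :: 'a::real_inner))^2"
  by (simp add: power2_norm_eq_inner inner_add_left inner_add_right inner_commute)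

lemma power2_norm_diff: "(norm (u - v))^2 = (norm u)^2 - 2 * (u \<bullet> v) + (norm (v :: 'a::real_inner))^2"
  by (simp add: power2_norm_eq_inner inner_diff_left inner_diff_right inner_commute)

lemma power2_norm_add_le: "(norm (u + v))^2 \<le> 2 * (norm u)^2 + 2 * (norm (v :: 'a::real_normed_vector))^2"
proof -
  have "(norm (u + v))^2 \<le> (norm u + norm v)^2"
    using norm_triangle_ineq[of u v] by (simp add: power_mono)
  also have "\<dots> \<le> 2 * (norm u)^2 + 2 * (norm v)^2"
    using zero_le_power2[of "norm u - norm v"] by (simp add: power2_eq_square algebra_simps)
  finally show ?thesis .
qed

lemma power2_norm_diff_split_le:
  fixes u v :: "'a::real_normed_vector"
  assumes r: "0 \<le> r" "r < 1"
  shows "r * (norm (u - v))^2 \<le> (1 + 3 * r) / 4 * (norm u)^2 + 4 * r / (1 - r) * (norm v)^2"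
proof -
  define x y where "x = norm u" and "y = norm v"
  have "r * (norm (u - v))^2 \<le> r * (x + y)^2"
    unfolding x_def y_def using r norm_triangle_ineq4[of u v] by (intro mult_left_mono power_mono) auto
  also have "\<dots> \<le> (1 + 3 * r) / 4 * x^2 + 4 * r / (1 - r) * y^2"
  proof -
    have "4 * (1 - r) * ((1 + 3 * r) / 4 * x^2 + 4 * r / (1 - r) * y^2 - r * (x + y)^2)
        = ((1 - r) * x - 4 * r * y)^2 + 12 * r * (1 - r) * y^2"
      using r by (simp add: field_simps power2_eq_square)
    also have "\<dots> \<ge> 0" using r by simp
    finally show ?thesis using r by (simp add: zero_le_mult_iff)
  qed
  finally show ?thesis unfolding x_def y_def .
qed

lemma power2_norm_sum_le:
  fixes v :: "'i \<Rightarrow> 'a::real_normed_vector"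
  assumes "finite A"
  shows "(norm (\<Sum>j\<in>A. v j))^2 \<le> real (card A) * (\<Sum>j\<in>A. (norm (v j))^2)"
proof -
  have "(norm (\<Sum>j\<in>A. v j))^2 \<le> (\<Sum>j\<in>A. 1 * norm (v j))^2"
    using norm_sum[of v A] by (simp add: power_mono)
  also have "\<dots> \<le> (\<Sum>j\<in>A. 1^2) * (\<Sum>j\<in>A. (norm (v j))^2)"
    by (rule Cauchy_Schwarz_ineq_sum)
  finally show ?thesis by simp
qed

lemma sum_power2_norm_diff_avg_pt:
  fixes X :: "'n::finite \<Rightarrow> 'a::real_inner"
  shows "(\<Sum>i\<in>UNIV. (norm (X i - y))^2) = real CARD('n) * (norm (avg_pt X - y))^2 + consensus_err X"
proof -
  let ?a = "avg_pt X"
  have "(\<Sum>i\<in>UNIV. (norm (X i - y))^2)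
      = (\<Sum>i\<in>UNIV. (norm (X i - ?a))^2 + 2 * ((X i - ?a) \<bullet> (?a - y)) + (norm (?a - y))^2)"
    using power2_norm_add[of "X _ - ?a" "?a - y"] by simp
  also have "\<dots> = consensus_err X + 2 * ((\<Sum>i\<in>UNIV. X i - ?a) \<bullet> (?a - y)) + real CARD('n) * (norm (?a - y))^2"
    by (simp add: sum.distrib consensus_err_def sum_distrib_left inner_sum_left)
  finally show ?thesis by (simp add: sum_diff_avg_pt)
qed

lemma consensus_err_le_sum_power2_norm:
  fixes X :: "'n::finite \<Rightarrow> 'a::real_inner"
  shows "consensus_err X \<le> (\<Sum>i\<in>UNIV. (norm (X i))^2)"
  using sum_power2_norm_diff_avg_pt[of X 0] by simp

lemma consensus_err_nonneg: "consensus_err X \<ge> 0"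
  unfolding consensus_err_def by (simp add: sum_nonneg)

lemma avg_pt_mix:
  fixes W :: "real^'n::finite^'n" and Y :: "'n \<Rightarrow> 'a::real_vector"
  assumes W_sym: "\<And>i j. W$i$j = W$j$i" and W_stoch: "\<And>i. (\<Sum>j\<in>UNIV. W$i$j) = 1"
  shows "avg_pt (\<lambda>i. \<Sum>j\<in>UNIV. W$i$j *\<^sub>R Y j) = avg_pt Y"
proof -
  have "(\<Sum>i\<in>UNIV. \<Sum>j\<in>UNIV. W$i$j *\<^sub>R Y j) = (\<Sum>j\<in>UNIV. (\<Sum>i\<in>UNIV. W$j$i) *\<^sub>R Y j)"
    by (subst sum.swap) (simp add: scaleR_sum_left W_sym)
  then show ?thesis unfolding avg_pt_def by (simp add: W_stoch)
qed

lemma power2_norm_eq_sum_Basis: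
  fixes x :: "'a::euclidean_space"
  shows "(norm x)^2 = (\<Sum>b\<in>Basis. (x \<bullet> b)^2)"
  unfolding power2_norm_eq_inner by (subst euclidean_inner) (simp add: power2_eq_square)

lemma power2_norm_vec: "(norm v)^2 = (\<Sum>i\<in>UNIV. (v$i)^2)" for v :: "real^'n::finite"
  unfolding power2_norm_eq_inner inner_vec_def by (simp add: power2_eq_square)

(* In every coordinate, mixing acts on the deviations from the average (which sum to zero)
   as the matrix W - 1 1^T / n, whose operator norm is rho_w W. *)
lemma consensus_err_mix_le:
  fixes W :: "real^'n::finite^'n" and Y :: "'n \<Rightarrow> 'a::euclidean_space"
  assumes W_sym: "\<And>i j. W$i$j = W$j$i" and W_stoch: "\<And>i. (\<Sum>j\<in>UNIV. W$i$j) = 1"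
  shows "consensus_err (\<lambda>i. \<Sum>j\<in>UNIV. W$i$j *\<^sub>R Y j) \<le> (rho_w W)^2 * consensus_err Y"
proof -
  define a where "a = avg_pt Y"
  define Z where "Z = (\<lambda>i. \<Sum>j\<in>UNIV. W$i$j *\<^sub>R Y j)"
  define M where "M = W - (\<chi> i j. 1 / real CARD('n))"
  define v where "v = (\<lambda>b. \<chi> j. (Y j - a) \<bullet> b)"
  have avg_Z: "avg_pt Z = a" unfolding Z_def a_def by (rule avg_pt_mix[OF W_sym W_stoch])
  have Z_dev: "Z i - a = (\<Sum>j\<in>UNIV. (M$i$j) *\<^sub>R (Y j - a))" for i
  proof -
    have "(\<Sum>j\<in>UNIV. (1 / real CARD('n)) *\<^sub>R (Y j - a)) = 0"
      unfolding a_def by (simp add: scaleR_sum_right[symmetric] sum_diff_avg_pt)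
    then show ?thesis
      unfolding M_def Z_def using W_stoch[of i]
      by (simp add: scaleR_diff_left scaleR_diff_right sum_subtractf scaleR_sum_left[symmetric])
  qed
  have M_v: "(M *v v b)$i = (Z i - a) \<bullet> b" for b i
    unfolding Z_dev v_def by (simp add: matrix_vector_mult_def inner_sum_left)
  have "consensus_err Z = (\<Sum>i\<in>UNIV. \<Sum>b\<in>Basis. ((Z i - a) \<bullet> b)^2)"
    unfolding consensus_err_def avg_Z by (simp add: power2_norm_eq_sum_Basis)
  also have "\<dots> = (\<Sum>b\<in>Basis. (norm (M *v v b))^2)"
    by (subst sum.swap) (simp add: power2_norm_vec M_v)
  also have "\<dots> \<le> (\<Sum>b\<in>Basis. (rho_w W)^2 * (norm (v b))^2)"
  proof (rule sum_mono)
    fix b :: 'a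
    have "norm (M *v v b) \<le> rho_w W * norm (v b)"
      unfolding rho_w_def M_def by (rule onorm) simp
    then show "(norm (M *v v b))^2 \<le> (rho_w W)^2 * (norm (v b))^2"
      by (metis norm_ge_zero power_mono power_mult_distrib)
  qed
  also have "\<dots> = (rho_w W)^2 * (\<Sum>j\<in>UNIV. \<Sum>b\<in>Basis. ((Y j - a) \<bullet> b)^2)"
    by (simp add: sum_distrib_left[symmetric] power2_norm_vec v_def) (subst sum.swap, simp)
  also have "\<dots> = (rho_w W)^2 * consensus_err Y"
    unfolding consensus_err_def a_def by (simp add: power2_norm_eq_sum_Basis)
  finally show ?thesis unfolding Z_def .
qed

section \<open>Smooth strongly convex functions\<close>

lemma has_field_derivative_along_line:
  fixes f :: "'a::real_inner \<Rightarrow> real"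
  assumes "(f has_derivative (\<lambda>h. G \<bullet> h)) (at (x + t *\<^sub>R d))"
  shows "((\<lambda>s. f (x + s *\<^sub>R d)) has_field_derivative (G \<bullet> d)) (at t)"
proof -
  have "((\<lambda>s. x + s *\<^sub>R d) has_derivative (\<lambda>s. s *\<^sub>R d)) (at t)"
    by (auto intro!: derivative_eq_intros)
  from has_derivative_compose[OF this assms]
  have "((\<lambda>s. f (x + s *\<^sub>R d)) has_derivative (\<lambda>s. G \<bullet> (s *\<^sub>R d))) (at t)"
    by (simp add: o_def)
  then show ?thesis
    by (rule has_derivative_imp_has_field_derivative) (simp add: algebra_simps)
qed

lemma convex_on_along_line:
  assumes "convex_on UNIV h"
  shows "convex_on UNIV (\<lambda>t::real. h (x + t *\<^sub>R d))"
proof (rule convex_onI)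
  fix u a b :: real assume u: "0 < u" "u < 1"
  have "x + ((1 - u) *\<^sub>R a + u *\<^sub>R b) *\<^sub>R d = (1 - u) *\<^sub>R (x + a *\<^sub>R d) + u *\<^sub>R (x + b *\<^sub>R d)"
    by (simp add: algebra_simps)
  then show "h (x + ((1 - u) *\<^sub>R a + u *\<^sub>R b) *\<^sub>R d) \<le> (1 - u) * h (x + a *\<^sub>R d) + u * h (x + b *\<^sub>R d)"
    using convex_onD[OF assms, of u] u by simp
qed simp

lemma strongly_convex_lower_bound:
  fixes f :: "'a::real_inner \<Rightarrow> real"
  assumes der: "\<And>z. (f has_derivative (\<lambda>h. g z \<bullet> h)) (at z)"
    and sc: "strongly_convex \<mu> f"
  shows "f y \<ge> f x + g x \<bullet> (y - x) + \<mu> / 2 * (norm (y - x))^2"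
proof -
  define h where "h = (\<lambda>z. f z - \<mu> / 2 * (norm z)^2)"
  define d where "d = y - x"
  define \<phi> where "\<phi> = (\<lambda>t::real. h (x + t *\<^sub>R d))"
  have "convex_on UNIV h" using sc unfolding strongly_convex_def h_def by simp
  then have convex_\<phi>: "convex_on UNIV \<phi>"
    unfolding \<phi>_def by (rule convex_on_along_line)
  have h_der: "(h has_derivative (\<lambda>k. (g z - \<mu> *\<^sub>R z) \<bullet> k)) (at z)" for z
  proof -
    have "((\<lambda>z. f z - \<mu> / 2 * (z \<bullet> z)) has_derivative (\<lambda>k. g z \<bullet> k - \<mu> / 2 * (z \<bullet> k + k \<bullet> z))) (at z)"
      by (auto intro!: derivative_eq_intros der)
    then show ?thesis unfolding h_def power2_norm_eq_inner
      by (rule has_derivative_eq_rhs) (auto simp: fun_eq_iff inner_diff_left inner_commute algebra_simps)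
  qed
  have "(\<phi> has_field_derivative ((g x - \<mu> *\<^sub>R x) \<bullet> d)) (at 0)"
    unfolding \<phi>_def by (rule has_field_derivative_along_line) (use h_der in simp)
  then have "\<phi> 1 - \<phi> 0 \<ge> ((g x - \<mu> *\<^sub>R x) \<bullet> d) * (1 - 0)"
    by (intro convex_on_imp_above_tangent[OF convex_\<phi>]) (auto intro: has_field_derivative_at_within)
  then have "h y - h x \<ge> (g x - \<mu> *\<^sub>R x) \<bullet> d" unfolding \<phi>_def d_def by simp
  moreover have "(norm y)^2 = (norm x)^2 + 2 * (x \<bullet> d) + (norm d)^2"
    unfolding d_def using power2_norm_add[of x "y - x"] by simp
  ultimately show ?thesis unfolding h_def d_def
    by (simp add: inner_diff_left algebra_simps)
qed

lemma lipschitz_gradient_upper_bound: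
  fixes f :: "'a::real_inner \<Rightarrow> real"
  assumes der: "\<And>z. (f has_derivative (\<lambda>h. g z \<bullet> h)) (at z)"
    and lip: "L-lipschitz_on UNIV g"
  shows "f y \<le> f x + g x \<bullet> (y - x) + L / 2 * (norm (y - x))^2"
proof -
  define d where "d = y - x"
  define \<psi> where "\<psi> = (\<lambda>t. f (x + t *\<^sub>R d) - t * (g x \<bullet> d) - L / 2 * t^2 * (norm d)^2)"
  have "\<psi> 1 \<le> \<psi> 0"
  proof (rule DERIV_nonpos_imp_nonincreasing[of 0 1 \<psi>])
    fix t :: real assume t: "0 \<le> t" "t \<le> 1"
    have "(g (x + t *\<^sub>R d) - g x) \<bullet> d \<le> norm (g (x + t *\<^sub>R d) - g x) * norm d"
      by (rule norm_cauchy_schwarz)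
    also have "\<dots> \<le> (L * norm (t *\<^sub>R d)) * norm d"
      using lipschitz_on_normD[OF lip, of "x + t *\<^sub>R d" x] by (intro mult_right_mono) auto
    also have "\<dots> = L * t * (norm d)^2" using t by (simp add: power2_eq_square)
    finally have "g (x + t *\<^sub>R d) \<bullet> d - g x \<bullet> d - L * t * (norm d)^2 \<le> 0"
      by (simp add: inner_diff_left)
    moreover have "(\<psi> has_field_derivative (g (x + t *\<^sub>R d) \<bullet> d - g x \<bullet> d - L * t * (norm d)^2)) (at t)"
      unfolding \<psi>_def by (rule derivative_eq_intros has_field_derivative_along_line der refl | simp)+
    ultimately show "\<exists>y. (\<psi> has_field_derivative y) (at t) \<and> y \<le> 0" by blast
  qed simp
  then show ?thesis unfolding \<psi>_def d_def by simp
qed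

lemma gradient_eq_0_if_minimum:
  fixes F :: "'a::real_inner \<Rightarrow> real"
  assumes min: "\<And>y. F x \<le> F y"
    and upper: "\<And>y. F y \<le> F x + G \<bullet> (y - x) + K / 2 * (norm (y - x))^2"
    and K: "K > 0"
  shows "G = 0"
proof -
  define y where "y = x - (1 / K) *\<^sub>R G"
  have "G \<bullet> (y - x) + K / 2 * (norm (y - x))^2 = - ((norm G)^2 / (2 * K))"
    unfolding y_def power2_norm_eq_inner using K by (simp add: field_simps)
  then have "(norm G)^2 / (2 * K) \<le> 0"
    using min[of y] upper[of y] by linarith
  then show "G = 0" using K by (simp add: divide_le_0_iff)
qed

lemma young_mult_le:
  fixes \<mu> L u v :: real
  assumes "\<mu> > 0"
  shows "L * u * v \<le> \<mu> / 4 * u^2 + L^2 / \<mu> * v^2"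
proof -
  have "\<mu> / 4 * u^2 + L^2 / \<mu> * v^2 - L * u * v = (\<mu> * u / 2 - L * v)^2 / \<mu>"
    using assms by (simp add: power2_eq_square field_simps)
  moreover have "0 \<le> (\<mu> * u / 2 - L * v)^2 / \<mu>" using assms by simp
  ultimately show ?thesis by linarith
qed

(* In use, x is an agent's iterate, a the average of all agents, y the reference point
   and xs the minimiser; the last term pays for evaluating the gradient at x instead of a. *)
lemma inner_gradient_diff_lower_bound:
  fixes F :: "'a::real_inner \<Rightarrow> real"
  assumes der: "\<And>z. (F has_derivative (\<lambda>h. G z \<bullet> h)) (at z)"
    and sc: "strongly_convex \<mu> F" and lip: "L-lipschitz_on UNIV G" and \<mu>: "\<mu> > 0"
  shows "(G x - G xs) \<bullet> (a - y) \<ge> \<mu> / 2 * (norm (x - y))^2 + \<mu> / 4 * (norm (x - xs))^2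
           - L / 2 * (norm (y - xs))^2 - L^2 / \<mu> * (norm (a - x))^2"
proof -
  have three_point: "(G x - G xs) \<bullet> (x - y) = (F y - F x - G x \<bullet> (y - x)) + (F x - F xs - G xs \<bullet> (x - xs))
              - (F y - F xs - G xs \<bullet> (y - xs))"
    by (simp add: inner_diff_left inner_diff_right)
  have "F y - F x - G x \<bullet> (y - x) \<ge> \<mu> / 2 * (norm (x - y))^2"
    using strongly_convex_lower_bound[OF der sc, where x=x and y=y] by (simp add: norm_minus_commute)
  moreover have "F x - F xs - G xs \<bullet> (x - xs) \<ge> \<mu> / 2 * (norm (x - xs))^2"
    using strongly_convex_lower_bound[OF der sc, where x=xs and y=x] by simp
  moreover have "F y - F xs - G xs \<bullet> (y - xs) \<le> L / 2 * (norm (y - xs))^2"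
    using lipschitz_gradient_upper_bound[OF der lip, where x=xs and y=y] by simp
  moreover have "- ((G x - G xs) \<bullet> (a - x)) \<le> \<mu> / 4 * (norm (x - xs))^2 + L^2 / \<mu> * (norm (a - x))^2"
  proof -
    have "- ((G x - G xs) \<bullet> (a - x)) \<le> norm (G x - G xs) * norm (a - x)"
      using norm_cauchy_schwarz[of "-(G x - G xs)" "a - x"] by (simp only: inner_minus_left norm_minus_cancel)
    also have "\<dots> \<le> L * norm (x - xs) * norm (a - x)"
      using lipschitz_on_normD[OF lip, of x xs] by (intro mult_right_mono) auto
    also have "\<dots> \<le> \<mu> / 4 * (norm (x - xs))^2 + L^2 / \<mu> * (norm (a - x))^2"
      by (rule young_mult_le[OF \<mu>])
    finally show ?thesis .
  qed
  moreover have "(G x - G xs) \<bullet> (a - y) = (G x - G xs) \<bullet> (x - y) + (G x - G xs) \<bullet> (a - x)"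
    by (simp add: inner_diff_right)
  ultimately show ?thesis using three_point by linarith
qed

section \<open>Sampling without replacement\<close>

abbreviation perms :: "nat \<Rightarrow> (nat \<Rightarrow> nat) set" where
  "perms m \<equiv> {p. p permutes {..<m}}"

lemma finite_perms: "finite (perms m)"
  by (rule finite_permutations) simp

lemma card_perms_pos: "card (perms m) > 0"
  using finite_perms permutes_id card_gt_0_iff by blast

lemma perms_less: "p \<in> perms m \<Longrightarrow> k < m \<Longrightarrow> p k < m"
  using permutes_in_image by fastforce

lemma sum_perms_value:
  assumes l: "l < m"
  shows "(\<Sum>p\<in>perms m. \<psi> (p l)) = real (card (perms m)) / real m * (\<Sum>k<m. \<psi> k)"
proof -
  define N where "N a = (\<Sum>p\<in>perms m. if p l = a then 1 else (0::real))" for a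
  have N_eq: "N a = N 0" if a: "a < m" for a
  proof -
    have \<tau>: "Transposition.transpose 0 a permutes {..<m}" using a by (intro permutes_swap_id) auto
    have "N a = (\<Sum>p\<in>perms m. if (Transposition.transpose 0 a \<circ> p) l = a then 1 else (0::real))"
      unfolding N_def by (rule setum_permutations_compose_left[OF \<tau>])
    also have "\<dots> = N 0"
      unfolding N_def by (intro sum.cong refl) (auto simp: transpose_eq_iff)
    finally show ?thesis .
  qed
  have sum_value: "(\<Sum>p\<in>perms m. \<phi> (p l)) = N 0 * (\<Sum>a<m. \<phi> a)" for \<phi> :: "nat \<Rightarrow> real"
  proof -
    have "(\<Sum>p\<in>perms m. \<phi> (p l)) = (\<Sum>a<m. \<Sum>p\<in>{p\<in>perms m. p l = a}. \<phi> (p l))"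
      by (rule sum.group[symmetric]) (auto simp: finite_perms perms_less l)
    also have "\<dots> = (\<Sum>a<m. N a * \<phi> a)"
    proof (rule sum.cong[OF refl])
      fix a
      have "(\<Sum>p\<in>{p\<in>perms m. p l = a}. \<phi> (p l)) = (\<Sum>p\<in>perms m. if p l = a then \<phi> a else 0)"
        by (subst sum.inter_filter[OF finite_perms]) (auto intro: sum.cong)
      also have "\<dots> = N a * \<phi> a"
        unfolding N_def sum_distrib_right by (intro sum.cong refl) simp
      finally show "(\<Sum>p\<in>{p\<in>perms m. p l = a}. \<phi> (p l)) = N a * \<phi> a" .
    qed
    also have "\<dots> = (\<Sum>a<m. N 0 * \<phi> a)"
      by (intro sum.cong refl) (metis N_eq lessThan_iff)
    also have "\<dots> = N 0 * (\<Sum>a<m. \<phi> a)"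
      by (simp add: sum_distrib_left)
    finally show ?thesis .
  qed
  have "real (card (perms m)) = N 0 * real m"
    using sum_value[of "\<lambda>_. 1"] by simp
  with l have "N 0 = real (card (perms m)) / real m" by simp
  then show ?thesis using sum_value[of \<psi>] by simp
qed

lemma exists_permutes_pair:
  assumes "a < m" "b < m" "a' < m" "b' < m" "a \<noteq> b" "a' \<noteq> b'"
  obtains \<tau> where "\<tau> permutes {..<m}" "\<tau> a = a'" "\<tau> b = b'"
proof -
  define \<tau>\<^sub>1 where "\<tau>\<^sub>1 = Transposition.transpose a a'"
  define \<tau>\<^sub>2 where "\<tau>\<^sub>2 = Transposition.transpose (\<tau>\<^sub>1 b) b'"
  have "\<tau>\<^sub>1 b < m" "\<tau>\<^sub>1 b \<noteq> a'"
    unfolding \<tau>\<^sub>1_def using assms by (auto simp: Transposition.transpose_def)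
  then have "\<tau>\<^sub>2 \<circ> \<tau>\<^sub>1 permutes {..<m}"
    unfolding \<tau>\<^sub>1_def \<tau>\<^sub>2_def using assms by (intro permutes_compose permutes_swap_id) auto
  moreover have "(\<tau>\<^sub>2 \<circ> \<tau>\<^sub>1) a = a'" "(\<tau>\<^sub>2 \<circ> \<tau>\<^sub>1) b = b'"
    using \<open>\<tau>\<^sub>1 b \<noteq> a'\<close> assms unfolding \<tau>\<^sub>2_def \<tau>\<^sub>1_def by (auto simp: Transposition.transpose_def)
  ultimately show ?thesis by (rule that)
qed

definition covisit_count :: "nat \<Rightarrow> nat \<Rightarrow> nat \<Rightarrow> nat \<Rightarrow> real" where
  "covisit_count m l a b = (\<Sum>p\<in>perms m. of_bool (a \<in> p ` {..<l} \<and> b \<in> p ` {..<l}))"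

lemma covisit_count_permutes:
  assumes \<tau>: "\<tau> permutes {..<m}"
  shows "covisit_count m l (\<tau> a) (\<tau> b) = covisit_count m l a b"
proof -
  have image: "\<tau> x \<in> (\<tau> \<circ> p) ` {..<l} \<longleftrightarrow> x \<in> p ` {..<l}" for x p
    using inj_eq[OF permutes_inj[OF \<tau>]] by auto
  have "covisit_count m l (\<tau> a) (\<tau> b)
      = (\<Sum>p\<in>perms m. of_bool (\<tau> a \<in> (\<tau> \<circ> p) ` {..<l} \<and> \<tau> b \<in> (\<tau> \<circ> p) ` {..<l}))"
    unfolding covisit_count_def by (rule setum_permutations_compose_left[OF \<tau>])
  then show ?thesis unfolding image covisit_count_def .
qed

lemma covisit_count_off_diagonal:
  assumes "a < m" "b < m" "a \<noteq> b"
  shows "covisit_count m l a b = covisit_count m l 0 1"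
proof -
  obtain \<tau> where "\<tau> permutes {..<m}" "\<tau> 0 = a" "\<tau> 1 = b"
    using exists_permutes_pair[of 0 m 1 a b] assms by auto
  with covisit_count_permutes show ?thesis by metis
qed

lemma sum_power2_norm_diff_mean_le:
  fixes x :: "nat \<Rightarrow> 'a::real_inner"
  shows "(\<Sum>l<m. (norm (x l - (1 / real m) *\<^sub>R (\<Sum>k<m. x k)))^2) \<le> (\<Sum>l<m. (norm (x l))^2)"
proof (cases "m = 0")
  case False
  define c where "c = (1 / real m) *\<^sub>R (\<Sum>k<m. x k)"
  have sum_x: "(\<Sum>k<m. x k) = real m *\<^sub>R c" unfolding c_def using False by simp
  have "(\<Sum>l<m. (norm (x l - c))^2) = (\<Sum>l<m. (norm (x l))^2) - 2 * ((\<Sum>l<m. x l) \<bullet> c) + real m * (norm c)^2"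
    by (simp add: power2_norm_diff sum.distrib sum_subtractf sum_distrib_left inner_sum_left)
  also have "\<dots> = (\<Sum>l<m. (norm (x l))^2) - real m * (norm c)^2"
    unfolding sum_x by (simp add: power2_norm_eq_inner)
  finally show ?thesis unfolding c_def by simp
qed simp

lemma sum_perms_power2_norm_partial_sum:
  fixes c :: "nat \<Rightarrow> 'a::real_inner"
  assumes lm: "l \<le> m"
  shows "(\<Sum>p\<in>perms m. (norm (\<Sum>k<l. c (p k)))^2) = (\<Sum>a<m. \<Sum>b<m. covisit_count m l a b * (c a \<bullet> c b))"
proof -
  let ?I = "\<lambda>p a. of_bool (a \<in> p ` {..<l}) :: real"
  have partial_sum: "(\<Sum>k<l. c (p k)) = (\<Sum>a<m. ?I p a *\<^sub>R c a)" if p: "p \<in> perms m" for p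
  proof -
    have "inj_on p {..<l}" using p by (auto intro: inj_on_subset permutes_inj)
    then have "(\<Sum>k<l. c (p k)) = (\<Sum>a\<in>p ` {..<l}. c a)" by (simp add: sum.reindex)
    also have "\<dots> = (\<Sum>a\<in>{..<m} \<inter> p ` {..<l}. c a)"
      using perms_less[OF p] lm by (intro sum.cong) auto
    also have "\<dots> = (\<Sum>a<m. ?I p a *\<^sub>R c a)"
      by (subst sum.inter_restrict) (auto intro!: sum.cong)
    finally show ?thesis .
  qed
  have expand: "(norm (\<Sum>a<m. ?I p a *\<^sub>R c a))^2 = (\<Sum>a<m. \<Sum>b<m. ?I p a * ?I p b * (c a \<bullet> c b))" for p
    unfolding power2_norm_eq_inner
    by (simp add: inner_sum_left inner_sum_right sum_distrib_left mult.assoc inner_commute mult.left_commute)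
  have "(\<Sum>p\<in>perms m. (norm (\<Sum>k<l. c (p k)))^2)
      = (\<Sum>p\<in>perms m. \<Sum>a<m. \<Sum>b<m. ?I p a * ?I p b * (c a \<bullet> c b))"
    by (rule sum.cong) (simp_all add: partial_sum expand)
  also have "\<dots> = (\<Sum>a<m. \<Sum>b<m. \<Sum>p\<in>perms m. ?I p a * ?I p b * (c a \<bullet> c b))"
    by (subst sum.swap) (rule sum.cong[OF refl], rule sum.swap)
  also have "\<dots> = (\<Sum>a<m. \<Sum>b<m. covisit_count m l a b * (c a \<bullet> c b))"
    unfolding covisit_count_def by (simp add: sum_distrib_right of_bool_conj)
  finally show ?thesis .
qed

(* All pairs a \<noteq> b are visited together equally often, so the cross terms add up to a multiple
   of (\<Sum>a<m. c a) \<bullet> (\<Sum>a<m. c a) = 0 minus the diagonal. *)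
lemma sum_perms_power2_norm_partial_sum_le:
  fixes c :: "nat \<Rightarrow> 'a::real_inner"
  assumes c0: "(\<Sum>a<m. c a) = 0" and lm: "l \<le> m"
  shows "(\<Sum>p\<in>perms m. (norm (\<Sum>k<l. c (p k)))^2) \<le> real (card (perms m)) * (\<Sum>a<m. (norm (c a))^2)"
proof -
  let ?F = "covisit_count m l"
  have "(\<Sum>p\<in>perms m. (norm (\<Sum>k<l. c (p k)))^2)
      = (\<Sum>a<m. \<Sum>b<m. (if a = b then (?F a a - ?F 0 1) * (c a \<bullet> c b) else 0) + ?F 0 1 * (c a \<bullet> c b))"
    unfolding sum_perms_power2_norm_partial_sum[OF lm]
    by (intro sum.cong refl) (auto simp: algebra_simps dest: covisit_count_off_diagonal[where l=l])
  also have "\<dots> = (\<Sum>a<m. (?F a a - ?F 0 1) * (norm (c a))^2) + ?F 0 1 * ((\<Sum>a<m. c a) \<bullet> (\<Sum>b<m. c b))"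
    by (simp add: sum.distrib sum_distrib_left inner_sum_left inner_sum_right power2_norm_eq_inner inner_commute)
  also have "\<dots> \<le> (\<Sum>a<m. real (card (perms m)) * (norm (c a))^2)"
  proof -
    have "?F 0 1 \<ge> 0" unfolding covisit_count_def by (simp add: sum_nonneg)
    moreover have "?F a a \<le> real (card (perms m))" for a
      unfolding covisit_count_def using sum_mono[of "perms m" _ "\<lambda>_. 1::real"] by simp
    ultimately have "?F a a - ?F 0 1 \<le> real (card (perms m))" for a
      by (meson diff_le_eq le_add_same_cancel1 order.trans)
    with c0 show ?thesis by (auto intro!: sum_mono mult_right_mono)
  qed
  finally show ?thesis by (simp add: sum_distrib_left)
qed

definition uniform_mean :: "'b set \<Rightarrow> ('b \<Rightarrow> real) \<Rightarrow> real" where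
  "uniform_mean A f = (\<Sum>x\<in>A. f x) / real (card A)"

lemma uniform_mean_mono:
  "finite A \<Longrightarrow> (\<And>x. x \<in> A \<Longrightarrow> f x \<le> g x) \<Longrightarrow> uniform_mean A f \<le> uniform_mean A g"
  unfolding uniform_mean_def by (intro divide_right_mono sum_mono) auto

lemma uniform_mean_add: "uniform_mean A (\<lambda>x. f x + g x) = uniform_mean A f + uniform_mean A g"
  unfolding uniform_mean_def by (simp add: sum.distrib add_divide_distrib)

lemma uniform_mean_cmult: "uniform_mean A (\<lambda>x. c * f x) = c * uniform_mean A f"
  unfolding uniform_mean_def by (simp add: sum_distrib_left)

lemma uniform_mean_const: "finite A \<Longrightarrow> A \<noteq> {} \<Longrightarrow> uniform_mean A (\<lambda>x. c) = c"
  unfolding uniform_mean_def by simp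

lemma uniform_mean_sum: "uniform_mean A (\<lambda>x. \<Sum>k\<in>K. f k x) = (\<Sum>k\<in>K. uniform_mean A (f k))"
  unfolding uniform_mean_def by (simp add: sum.swap[of _ A] sum_divide_distrib)

lemma uniform_mean_affine:
  "finite A \<Longrightarrow> A \<noteq> {} \<Longrightarrow> uniform_mean A (\<lambda>x. a * f x + b) = a * uniform_mean A f + b"
  by (simp add: uniform_mean_add uniform_mean_cmult uniform_mean_const)

lemma uniform_mean_perms_value:
  "l < m \<Longrightarrow> uniform_mean (perms m) (\<lambda>p. \<psi> (p l)) = (1 / real m) * (\<Sum>k<m. \<psi> k)"
  using card_perms_pos[of m] by (simp add: uniform_mean_def sum_perms_value)

lemma uniform_mean_perms_centred_partial_sum_le:
  fixes x :: "nat \<Rightarrow> 'a::real_inner"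
  assumes l: "l \<le> m" and m: "m \<ge> 1"
  shows "uniform_mean (perms m) (\<lambda>p. (norm (\<Sum>k<l. x (p k) - (1 / real m) *\<^sub>R (\<Sum>k<m. x k)))^2)
    \<le> (\<Sum>k<m. (norm (x k))^2)"
proof -
  define c where "c k = x k - (1 / real m) *\<^sub>R (\<Sum>k<m. x k)" for k
  have "(\<Sum>k<m. c k) = 0"
    unfolding c_def using m by (simp add: sum_subtractf sum_constant_scaleR)
  then have "uniform_mean (perms m) (\<lambda>p. (norm (\<Sum>k<l. c (p k)))^2) \<le> (\<Sum>k<m. (norm (c k))^2)"
    unfolding uniform_mean_def using sum_perms_power2_norm_partial_sum_le[OF _ l] card_perms_pos[of m]
    by (simp add: pos_divide_le_eq mult.commute)
  also have "\<dots> \<le> (\<Sum>k<m. (norm (x k))^2)"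
    unfolding c_def by (rule sum_power2_norm_diff_mean_le)
  finally show ?thesis unfolding c_def .
qed

definition agent_perms :: "nat \<Rightarrow> ('n \<Rightarrow> nat \<Rightarrow> nat) set" where
  "agent_perms m = {\<pi>. \<forall>i. \<pi> i permutes {..<m}}"

lemma agent_perms_PiE: "agent_perms m = PiE UNIV (\<lambda>_. perms m)"
  unfolding agent_perms_def by (auto simp: PiE_UNIV_domain)

lemma finite_agent_perms: "finite (agent_perms m :: ('n::finite \<Rightarrow> nat \<Rightarrow> nat) set)"
  unfolding agent_perms_PiE by (intro finite_PiE) (auto simp: finite_perms)

lemma agent_perms_nonempty: "agent_perms m \<noteq> {}"
proof -
  have "(\<lambda>i. id) \<in> agent_perms m" unfolding agent_perms_def by (simp add: permutes_id)
  then show ?thesis by blast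
qed

lemma uniform_mean_agent_perms_component:
  fixes j :: "'n::finite"
  shows "uniform_mean (agent_perms m :: ('n \<Rightarrow> nat \<Rightarrow> nat) set) (\<lambda>\<pi>. \<phi> (\<pi> j))
       = uniform_mean (perms m) \<phi>"
proof -
  define c where "c = real (card (perms m))"
  define R where "R = (\<Prod>i\<in>UNIV - {j}. c)"
  have R: "R > 0" unfolding R_def c_def using card_perms_pos by (simp add: prod_pos)
  have "(\<Sum>\<pi>\<in>agent_perms m. \<phi> (\<pi> j))
      = (\<Sum>\<pi>\<in>PiE UNIV (\<lambda>_. perms m). \<Prod>i\<in>UNIV. if i = j then \<phi> (\<pi> i) else 1)"
    unfolding agent_perms_PiE by simp
  also have "\<dots> = (\<Prod>i\<in>UNIV. \<Sum>p\<in>perms m. if i = j then \<phi> p else 1)"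
    by (rule prod_sum_PiE[symmetric, where f="\<lambda>i p. if i = j then \<phi> p else 1"]) (auto simp: finite_perms)
  also have "\<dots> = (\<Sum>p\<in>perms m. \<phi> p) * R"
    unfolding R_def c_def by (subst prod.remove[of _ j]) (auto intro!: prod.cong)
  finally have sum_eq: "(\<Sum>\<pi>\<in>agent_perms m. \<phi> (\<pi> j)) = (\<Sum>p\<in>perms m. \<phi> p) * R" .
  have "real (card (agent_perms m :: ('n \<Rightarrow> nat \<Rightarrow> nat) set)) = (\<Prod>i\<in>(UNIV :: 'n set). c)"
    unfolding agent_perms_PiE c_def by (simp add: card_PiE)
  also have "\<dots> = c * R"
    unfolding R_def by (subst prod.remove[of "UNIV :: 'n set" j]) auto
  finally have "real (card (agent_perms m :: ('n \<Rightarrow> nat \<Rightarrow> nat) set)) = c * R" .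
  with sum_eq R show ?thesis unfolding uniform_mean_def c_def by simp
qed

lemma schedules_0: "schedules m 0 = {\<lambda>e i. id}"
  unfolding schedules_def by auto

lemma schedules_Suc:
  "schedules m (Suc t) = (\<lambda>(\<sigma>, \<pi>). \<sigma>(t := \<pi>)) ` (schedules m t \<times> agent_perms m)"
proof (intro set_eqI iffI)
  fix \<tau> assume \<tau>: "\<tau> \<in> schedules m (Suc t)"
  then have "\<tau>(t := (\<lambda>i. id)) \<in> schedules m t" "\<tau> t \<in> agent_perms m"
    unfolding schedules_def agent_perms_def by auto
  moreover have "\<tau> = (\<tau>(t := (\<lambda>i. id)))(t := \<tau> t)" by simp
  ultimately show "\<tau> \<in> (\<lambda>(\<sigma>, \<pi>). \<sigma>(t := \<pi>)) ` (schedules m t \<times> agent_perms m)"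
    by (intro rev_image_eqI[of "(\<tau>(t := (\<lambda>i. id)), \<tau> t)"]) auto
next
  fix \<tau> assume "\<tau> \<in> (\<lambda>(\<sigma>, \<pi>). \<sigma>(t := \<pi>)) ` (schedules m t \<times> agent_perms m)"
  then show "\<tau> \<in> schedules m (Suc t)"
    unfolding schedules_def agent_perms_def by (auto simp: less_Suc_eq)
qed

lemma inj_on_schedule_update: "inj_on (\<lambda>(\<sigma>, \<pi>). \<sigma>(t := \<pi>)) (schedules m t \<times> agent_perms m)"
proof (rule inj_onI, clarify)
  fix \<sigma> \<pi> \<sigma>' \<pi>'
  assume \<sigma>: "\<sigma> \<in> schedules m t" "\<sigma>' \<in> schedules m t" and eq: "\<sigma>(t := \<pi>) = \<sigma>'(t := \<pi>')"
  have "\<sigma> t = \<sigma>' t" using \<sigma> unfolding schedules_def by auto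
  then have "\<sigma> = \<sigma>'" using eq by (metis fun_upd_triv fun_upd_upd)
  moreover have "\<pi> = \<pi>'" using fun_cong[OF eq, of t] by simp
  ultimately show "\<sigma> = \<sigma>' \<and> \<pi> = \<pi>'" ..
qed

lemma finite_schedules: "finite (schedules m t :: (nat \<Rightarrow> 'n::finite \<Rightarrow> nat \<Rightarrow> nat) set)"
  by (induction t) (simp_all add: schedules_0 schedules_Suc finite_agent_perms)

lemma schedules_nonempty: "schedules m t \<noteq> {}"
  by (induction t) (auto simp: schedules_0 schedules_Suc agent_perms_nonempty)

lemma expect_sched_eq_uniform_mean: "expect_sched m t h = uniform_mean (schedules m t) h"
  unfolding expect_sched_def uniform_mean_def ..

lemma expect_sched_0: "expect_sched m 0 h = h (\<lambda>e i. id)"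
  unfolding expect_sched_def schedules_0 by (simp add: id_def)

(* Conditioning on the first t epochs: the permutations of epoch t are uniform and
   independent of the earlier ones. *)
lemma expect_sched_Suc:
  "expect_sched m (Suc t) (h :: (nat \<Rightarrow> 'n::finite \<Rightarrow> nat \<Rightarrow> nat) \<Rightarrow> real)
     = expect_sched m t (\<lambda>\<sigma>. uniform_mean (agent_perms m) (\<lambda>\<pi>. h (\<sigma>(t := \<pi>))))"
proof -
  have "card (agent_perms m :: ('n \<Rightarrow> nat \<Rightarrow> nat) set) > 0"
    by (simp add: card_gt_0_iff finite_agent_perms agent_perms_nonempty)
  moreover have "(\<Sum>\<tau>\<in>schedules m (Suc t). h \<tau>) = (\<Sum>\<sigma>\<in>schedules m t. \<Sum>\<pi>\<in>agent_perms m. h (\<sigma>(t := \<pi>)))"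
    unfolding schedules_Suc
    by (subst sum.reindex[OF inj_on_schedule_update]) (simp add: sum.cartesian_product case_prod_unfold)
  moreover have "card (schedules m (Suc t) :: (nat \<Rightarrow> 'n \<Rightarrow> nat \<Rightarrow> nat) set)
      = card (schedules m t :: (nat \<Rightarrow> 'n \<Rightarrow> nat \<Rightarrow> nat) set) * card (agent_perms m :: ('n \<Rightarrow> nat \<Rightarrow> nat) set)"
    unfolding schedules_Suc by (subst card_image[OF inj_on_schedule_update]) (simp add: card_cartesian_product)
  ultimately show ?thesis
    unfolding expect_sched_def uniform_mean_def by (simp add: sum_divide_distrib[symmetric] field_simps)
qed

lemma expect_sched_mono:
  "(\<And>\<sigma>. \<sigma> \<in> schedules m t \<Longrightarrow> h \<sigma> \<le> h' \<sigma>) \<Longrightarrow> expect_sched m t h \<le> expect_sched m t h'"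
  unfolding expect_sched_eq_uniform_mean by (rule uniform_mean_mono[OF finite_schedules])

lemma expect_sched_affine: "expect_sched m t (\<lambda>\<sigma>. a * h \<sigma> + b) = a * expect_sched m t h + b"
  unfolding expect_sched_eq_uniform_mean by (rule uniform_mean_affine[OF finite_schedules schedules_nonempty])

lemma drr_iter_cong:
  "(\<And>e. e < t \<Longrightarrow> \<sigma> e = \<sigma>' e) \<Longrightarrow> drr_iter W \<alpha> g m \<sigma> x0 t = drr_iter W \<alpha> g m \<sigma>' x0 t"
  by (induction t) auto

lemma drr_iter_fun_upd: "drr_iter W \<alpha> g m (\<sigma>(t := \<pi>)) x0 t = drr_iter W \<alpha> g m \<sigma> x0 t"
  by (rule drr_iter_cong) simp

(* The expansion of |e - alpha v|^2 for one gradient step, where P = n (v \<bullet> e) and Q = |v|^2. *)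
lemma gradient_step_arith:
  fixes n \<alpha> \<mu> L C T P Q E S :: real
  assumes n: "n > 0" and \<alpha>: "\<alpha> > 0" and \<mu>: "\<mu> > 0" and \<alpha>L: "\<alpha> * L^2 \<le> \<mu> / 2"
    and P: "P \<ge> \<mu> / 2 * (n * E + C) + \<mu> / 4 * T - n * L / 2 * S - L^2 / \<mu> * C"
    and Q: "Q \<le> L^2 / n * T" and C: "C \<ge> 0" and T: "T \<ge> 0"
  shows "E - 2 * (\<alpha> / n) * P + \<alpha>^2 * Q \<le> (1 - \<alpha> * \<mu>) * E + \<alpha> * L * S + (2 * \<alpha> * L^2 / \<mu>) * (C / n)"
proof -
  have "2 * (\<alpha> / n) * P \<ge> 2 * (\<alpha> / n) * (\<mu> / 2 * (n * E + C) + \<mu> / 4 * T - n * L / 2 * S - L^2 / \<mu> * C)"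
    using mult_left_mono[OF P, of "2 * (\<alpha> / n)"] \<alpha> n by simp
  moreover have "2 * (\<alpha> / n) * (\<mu> / 2 * (n * E + C) + \<mu> / 4 * T - n * L / 2 * S - L^2 / \<mu> * C)
      = \<alpha> * \<mu> * E + \<alpha> * \<mu> * (C / n) + (\<alpha> * \<mu> / 2) * (T / n) - \<alpha> * L * S - (2 * \<alpha> * L^2 / \<mu>) * (C / n)"
    using n \<mu> by (simp add: field_simps)
  moreover have "\<alpha>^2 * Q \<le> (\<alpha> * (\<alpha> * L^2)) * (T / n)"
    using mult_left_mono[OF Q, of "\<alpha>^2"] by (simp add: power2_eq_square)
  moreover have "(\<alpha> * (\<alpha> * L^2)) * (T / n) \<le> (\<alpha> * \<mu> / 2) * (T / n)"
    using mult_right_mono[OF mult_left_mono[OF \<alpha>L, of \<alpha>], of "T / n"] \<alpha> n T by simp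
  moreover have "\<alpha> * \<mu> * (C / n) \<ge> 0" using \<alpha> \<mu> C n by simp
  ultimately show ?thesis by (simp add: algebra_simps)
qed

lemma coupled_recursion_contraction:
  fixes E' C' E C S D k p c q a b w :: real
  assumes E': "E' \<le> (1 - k) * E + p * S + c * C"
    and C': "C' \<le> q * C + a * (E + S) + b * D"
    and w: "w \<ge> 0" and wa_k: "w * a \<le> k / 2" and wa_p: "w * a \<le> p" and c: "c + w * q \<le> (1 - k / 2) * w"
    and nonneg: "E \<ge> 0" "S \<ge> 0" "C \<ge> 0"
  shows "E' + w * C' \<le> (1 - k / 2) * (E + w * C) + 2 * p * S + w * b * D"
proof -
  have "E' + w * C' \<le> (1 - k) * E + p * S + c * C + w * (q * C + a * (E + S) + b * D)"
    using E' mult_left_mono[OF C' w] by linarith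
  also have "\<dots> \<le> (1 - k / 2) * (E + w * C) + 2 * p * S + w * b * D"
  proof -
    have "(w * a) * E \<le> (k / 2) * E" "(w * a) * S \<le> p * S" "(c + w * q) * C \<le> ((1 - k / 2) * w) * C"
      using mult_right_mono[OF wa_k nonneg(1)] mult_right_mono[OF wa_p nonneg(2)] mult_right_mono[OF c nonneg(3)] .
    moreover have "(1 - k / 2) * (E + w * C) + 2 * p * S + w * b * D
        - ((1 - k) * E + p * S + c * C + w * (q * C + a * (E + S) + b * D))
        = ((k / 2) * E - (w * a) * E) + (p * S - (w * a) * S) + (((1 - k / 2) * w) * C - (c + w * q) * C)"
      by (simp add: field_simps)
    ultimately show ?thesis by linarith
  qed
  finally show ?thesis .
qed

lemma convex_comb_le:
  fixes a x y :: real
  assumes "0 \<le> a" "a \<le> 1" "0 \<le> x" "0 \<le> y"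
  shows "a * x + (1 - a) * y \<le> x + y"
  using mult_left_le_one_le[of x a] mult_left_le_one_le[of y "1 - a"] assms by linarith

section \<open>One local step of D-RR\<close>

locale drr_setting =
  fixes W :: "real^'n::finite^'n" and f :: "'n \<Rightarrow> nat \<Rightarrow> 'a::euclidean_space \<Rightarrow> real"
    and g :: "'n \<Rightarrow> nat \<Rightarrow> 'a \<Rightarrow> 'a" and m :: nat and \<mu> L \<alpha> :: real and xstar :: 'a
  assumes m_pos: "m \<ge> 1"
    and grad: "\<And>i l x. l < m \<Longrightarrow> (f i l has_derivative (\<lambda>h. g i l x \<bullet> h)) (at x)"
    and mu_pos: "0 < \<mu>" and mu_le_L: "\<mu> \<le> L"
    and sconv: "\<And>i l. l < m \<Longrightarrow> strongly_convex \<mu> (f i l)"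
    and lip: "\<And>i l. l < m \<Longrightarrow> L-lipschitz_on UNIV (g i l)"
    and W_sym: "\<And>i j. W$i$j = W$j$i"
    and W_stoch: "\<And>i. (\<Sum>j\<in>UNIV. W$i$j) = 1"
    and alpha_pos: "0 < \<alpha>"
    and rho_lt_1: "(rho_w W)^2 < 1"
    and alpha_mu: "\<alpha> * \<mu> \<le> (1 - (rho_w W)^2) / 2"
    and alpha_L: "1920 * \<alpha>^2 * L^4 \<le> (1 - (rho_w W)^2)^2 * \<mu>^2"
    and grad_sum_xstar: "(\<Sum>i\<in>UNIV. \<Sum>l<m. g i l xstar) = 0"
begin

definition "n = real CARD('n)"
definition "r = (rho_w W)^2"

lemma n_pos: "n > 0" unfolding n_def by simp
lemma r_nonneg: "r \<ge> 0" unfolding r_def by simp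
lemma r_less_1: "r < 1" using rho_lt_1 unfolding r_def .
lemma L_pos: "L > 0" using mu_pos mu_le_L by simp

lemma alpha_L_le: "1920 * (\<alpha>^2 * L^2) \<le> (1 - r)^2"
proof -
  have "(1 - r)^2 * \<mu>^2 \<le> (1 - r)^2 * L^2"
    using mu_pos mu_le_L by (intro mult_left_mono power_mono) auto
  then have "L^2 * (1920 * (\<alpha>^2 * L^2)) \<le> L^2 * (1 - r)^2"
    using alpha_L unfolding r_def by (simp add: power4_eq_xxxx power2_eq_square algebra_simps)
  then show ?thesis using L_pos by simp
qed

lemma alpha_L_le_mu: "\<alpha> * L^2 \<le> \<mu> / 2"
proof -
  have "(1 - r)^2 \<le> 1" using r_nonneg r_less_1 by (simp add: power_le_one)
  then have "(1 - r)^2 * \<mu>^2 \<le> \<mu>^2" by (simp add: mult_left_le_one_le)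
  then have "1920 * (\<alpha> * L^2)^2 \<le> \<mu>^2"
    using alpha_L unfolding r_def
    by (simp add: power_mult_distrib power2_eq_square[of "L^2"] power4_eq_xxxx mult.assoc)
  moreover have "(\<mu> / 2)^2 = \<mu>^2 / 4" by (simp add: power_divide)
  ultimately have "(\<alpha> * L^2)^2 \<le> (\<mu> / 2)^2" using zero_le_power2[of "\<alpha> * L^2"] by linarith
  from power2_le_imp_le[OF this] show ?thesis using mu_pos by simp
qed

lemma grad_lipschitz: "k < m \<Longrightarrow> norm (g j k x - g j k y) \<le> L * norm (x - y)"
  using lipschitz_on_normD[OF lip] by simp

lemma agent_perms_less: "\<pi> \<in> agent_perms m \<Longrightarrow> l < m \<Longrightarrow> \<pi> j l < m"
  unfolding agent_perms_def using perms_less by auto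

definition local_step :: "('n \<Rightarrow> nat \<Rightarrow> nat) \<Rightarrow> nat \<Rightarrow> ('n \<Rightarrow> 'a) \<Rightarrow> ('n \<Rightarrow> 'a)" where
  "local_step \<pi> l X = (\<lambda>i. \<Sum>j\<in>UNIV. W$i$j *\<^sub>R (X j - \<alpha> *\<^sub>R g j (\<pi> j l) (X j)))"

lemma drr_inner_Suc_local_step: "drr_inner W \<alpha> g \<pi> X (Suc l) = local_step \<pi> l (drr_inner W \<alpha> g \<pi> X l)"
  by (simp add: local_step_def Let_def)

lemma avg_pt_local_step:
  "avg_pt (local_step \<pi> l X) = avg_pt X - (\<alpha> / n) *\<^sub>R (\<Sum>j\<in>UNIV. g j (\<pi> j l) (X j))"
proof -
  have "avg_pt (local_step \<pi> l X) = avg_pt (\<lambda>j. X j - \<alpha> *\<^sub>R g j (\<pi> j l) (X j))"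
    unfolding local_step_def by (rule avg_pt_mix[OF W_sym W_stoch])
  then show ?thesis
    unfolding avg_pt_def n_def by (simp add: sum_subtractf scaleR_diff_right scaleR_sum_right[symmetric])
qed

lemma sum_inner_grad_diff_lower_bound:
  assumes \<pi>: "\<pi> \<in> agent_perms m" and l: "l < m"
  shows "(\<Sum>j\<in>UNIV. (g j (\<pi> j l) (X j) - g j (\<pi> j l) xstar) \<bullet> (avg_pt X - y))
    \<ge> \<mu> / 2 * (n * (norm (avg_pt X - y))^2 + consensus_err X) + \<mu> / 4 * (\<Sum>j\<in>UNIV. (norm (X j - xstar))^2)
       - n * L / 2 * (norm (y - xstar))^2 - L^2 / \<mu> * consensus_err X"
proof -
  let ?a = "avg_pt X"
  let ?lower = "\<lambda>j. \<mu> / 2 * (norm (X j - y))^2 + \<mu> / 4 * (norm (X j - xstar))^2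
           - L / 2 * (norm (y - xstar))^2 - L^2 / \<mu> * (norm (?a - X j))^2"
  have "(\<Sum>j\<in>UNIV. ?lower j) \<le> (\<Sum>j\<in>UNIV. (g j (\<pi> j l) (X j) - g j (\<pi> j l) xstar) \<bullet> (?a - y))"
  proof (rule sum_mono)
    fix j
    have "\<pi> j l < m" by (rule agent_perms_less[OF \<pi> l])
    then show "?lower j \<le> (g j (\<pi> j l) (X j) - g j (\<pi> j l) xstar) \<bullet> (?a - y)"
      by (intro inner_gradient_diff_lower_bound[where F="f j (\<pi> j l)"] grad sconv lip mu_pos)
  qed
  moreover have "(\<Sum>j\<in>UNIV. ?lower j) = \<mu> / 2 * (\<Sum>j\<in>UNIV. (norm (X j - y))^2)
      + \<mu> / 4 * (\<Sum>j\<in>UNIV. (norm (X j - xstar))^2)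
      - n * L / 2 * (norm (y - xstar))^2 - L^2 / \<mu> * (\<Sum>j\<in>UNIV. (norm (?a - X j))^2)"
    unfolding n_def by (simp add: sum.distrib sum_subtractf sum_distrib_left)
  moreover have "(\<Sum>j\<in>UNIV. (norm (?a - X j))^2) = consensus_err X"
    unfolding consensus_err_def by (simp add: norm_minus_commute)
  ultimately show ?thesis unfolding sum_power2_norm_diff_avg_pt n_def by simp
qed

lemma power2_norm_mean_grad_diff_le:
  assumes \<pi>: "\<pi> \<in> agent_perms m" and l: "l < m"
  shows "(norm ((1 / n) *\<^sub>R (\<Sum>j\<in>UNIV. g j (\<pi> j l) (X j) - g j (\<pi> j l) xstar)))^2
    \<le> L^2 / n * (\<Sum>j\<in>UNIV. (norm (X j - xstar))^2)"
proof -
  have "(norm ((1 / n) *\<^sub>R (\<Sum>j\<in>UNIV. g j (\<pi> j l) (X j) - g j (\<pi> j l) xstar)))^2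
      = (1 / n)^2 * (norm (\<Sum>j\<in>UNIV. g j (\<pi> j l) (X j) - g j (\<pi> j l) xstar))^2"
    using n_pos by (simp add: power_divide)
  also have "\<dots> \<le> (1 / n)^2 * (n * (\<Sum>j\<in>UNIV. (norm (g j (\<pi> j l) (X j) - g j (\<pi> j l) xstar))^2))"
    using power2_norm_sum_le[of "UNIV :: 'n set"] unfolding n_def by (intro mult_left_mono) auto
  also have "\<dots> \<le> (1 / n)^2 * (n * (\<Sum>j\<in>UNIV. (L * norm (X j - xstar))^2))"
    using grad_lipschitz[OF agent_perms_less[OF \<pi> l]] n_pos
    by (intro mult_left_mono sum_mono power_mono) auto
  also have "\<dots> = L^2 / n * (\<Sum>j\<in>UNIV. (norm (X j - xstar))^2)"
    using n_pos by (simp add: power_mult_distrib sum_distrib_left power2_eq_square mult_ac)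
  finally show ?thesis .
qed

(* Comparing
   it with the reference point y moved by the mean gradient at the minimiser isolates the gradient
   differences, which are controlled by strong convexity and smoothness. *)
lemma avg_err_local_step:
  assumes \<pi>: "\<pi> \<in> agent_perms m" and l: "l < m"
  shows "(norm (avg_pt (local_step \<pi> l X) - (y - (\<alpha> / n) *\<^sub>R (\<Sum>j\<in>UNIV. g j (\<pi> j l) xstar))))^2
     \<le> (1 - \<alpha> * \<mu>) * (norm (avg_pt X - y))^2 + \<alpha> * L * (norm (y - xstar))^2
        + (2 * \<alpha> * L^2 / \<mu>) * (consensus_err X / n)"
proof -
  define e where "e = avg_pt X - y"
  define v where "v = (1 / n) *\<^sub>R (\<Sum>j\<in>UNIV. g j (\<pi> j l) (X j) - g j (\<pi> j l) xstar)"
  define P where "P = (\<Sum>j\<in>UNIV. (g j (\<pi> j l) (X j) - g j (\<pi> j l) xstar) \<bullet> e)"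
  define T where "T = (\<Sum>j\<in>UNIV. (norm (X j - xstar))^2)"
  define C where "C = consensus_err X"
  have avg_eq: "avg_pt (local_step \<pi> l X) - (y - (\<alpha> / n) *\<^sub>R (\<Sum>j\<in>UNIV. g j (\<pi> j l) xstar)) = e - \<alpha> *\<^sub>R v"
    unfolding avg_pt_local_step e_def v_def by (simp add: sum_subtractf scaleR_diff_right algebra_simps)
  have expand: "(norm (e - \<alpha> *\<^sub>R v))^2 = (norm e)^2 - 2 * (\<alpha> / n) * P + \<alpha>^2 * (norm v)^2"
  proof -
    have "e \<bullet> (\<alpha> *\<^sub>R v) = (\<alpha> / n) * P"
      unfolding v_def P_def by (simp add: inner_sum_right inner_commute)
    then show ?thesis unfolding power2_norm_diff by (simp add: power_mult_distrib)
  qed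
  have "P \<ge> \<mu> / 2 * (n * (norm e)^2 + C) + \<mu> / 4 * T - n * L / 2 * (norm (y - xstar))^2 - L^2 / \<mu> * C"
    unfolding P_def e_def C_def T_def by (rule sum_inner_grad_diff_lower_bound[OF \<pi> l])
  moreover have "(norm v)^2 \<le> L^2 / n * T"
    unfolding v_def T_def by (rule power2_norm_mean_grad_diff_le[OF \<pi> l])
  moreover have "C \<ge> 0" "T \<ge> 0" unfolding C_def T_def by (simp_all add: consensus_err_nonneg sum_nonneg)
  ultimately show ?thesis
    unfolding avg_eq expand e_def[symmetric] C_def[symmetric]
    using gradient_step_arith[OF n_pos alpha_pos mu_pos alpha_L_le_mu] by blast
qed

lemma sum_power2_norm_grad_le:
  assumes \<pi>: "\<pi> \<in> agent_perms m" and l: "l < m"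
  shows "(\<Sum>j\<in>UNIV. (norm (g j (\<pi> j l) (X j)))^2)
    \<le> 2 * L^2 * (n * (2 * (norm (avg_pt X - y))^2 + 2 * (norm (y - xstar))^2) + consensus_err X)
       + 2 * (\<Sum>j\<in>UNIV. (norm (g j (\<pi> j l) xstar))^2)"
proof -
  have "(\<Sum>j\<in>UNIV. (norm (g j (\<pi> j l) (X j)))^2)
      \<le> (\<Sum>j\<in>UNIV. 2 * L^2 * (norm (X j - xstar))^2 + 2 * (norm (g j (\<pi> j l) xstar))^2)"
  proof (rule sum_mono)
    fix j
    let ?G = "g j (\<pi> j l)"
    have "(norm (?G (X j) - ?G xstar))^2 \<le> (L * norm (X j - xstar))^2"
      using grad_lipschitz[OF agent_perms_less[OF \<pi> l]] by (intro power_mono) auto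
    moreover have "(norm (?G (X j)))^2 \<le> 2 * (norm (?G (X j) - ?G xstar))^2 + 2 * (norm (?G xstar))^2"
      using power2_norm_add_le[of "?G (X j) - ?G xstar" "?G xstar"] by simp
    ultimately show "(norm (?G (X j)))^2 \<le> 2 * L^2 * (norm (X j - xstar))^2 + 2 * (norm (?G xstar))^2"
      by (simp add: power_mult_distrib)
  qed
  also have "\<dots> = 2 * L^2 * (n * (norm (avg_pt X - xstar))^2 + consensus_err X)
      + 2 * (\<Sum>j\<in>UNIV. (norm (g j (\<pi> j l) xstar))^2)"
    unfolding n_def by (simp only: sum.distrib sum_distrib_left[symmetric] sum_power2_norm_diff_avg_pt)
  also have "\<dots> \<le> 2 * L^2 * (n * (2 * (norm (avg_pt X - y))^2 + 2 * (norm (y - xstar))^2) + consensus_err X)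
      + 2 * (\<Sum>j\<in>UNIV. (norm (g j (\<pi> j l) xstar))^2)"
    using power2_norm_add_le[of "avg_pt X - y" "y - xstar"] n_pos
    by (intro add_right_mono mult_left_mono add_left_mono) auto
  finally show ?thesis .
qed

lemma consensus_contraction_coeff: "(1 + 3 * r) / 4 + 8 * r * \<alpha>^2 * L^2 / (1 - r) \<le> (1 + r) / 2"
proof -
  have "32 * r * (\<alpha>^2 * L^2) \<le> 32 * (\<alpha>^2 * L^2)"
    using r_less_1 by (intro mult_right_mono) auto
  also have "\<dots> \<le> (1 - r)^2"
  proof -
    have "0 \<le> \<alpha>^2 * L^2" by simp
    with alpha_L_le show ?thesis by linarith
  qed
  finally have "8 * r * \<alpha>^2 * L^2 / (1 - r) \<le> (1 - r) / 4"
    using r_less_1 by (simp add: field_simps power2_eq_square)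
  moreover have "(1 + 3 * r) / 4 + x \<le> (1 + r) / 2" if "x \<le> (1 - r) / 4" for x
    using that by (simp add: field_simps)
  ultimately show ?thesis by blast
qed

(* Mixing contracts the consensus error by r; the gradient step, split off with weights
   (1 + 3 r) / 4 and 4 r / (1 - r), costs at most the spread of the gradients. *)
lemma consensus_err_local_step:
  assumes \<pi>: "\<pi> \<in> agent_perms m" and l: "l < m"
  shows "consensus_err (local_step \<pi> l X) \<le> (1 + r) / 2 * consensus_err X
     + (16 * r * \<alpha>^2 * L^2 * n / (1 - r)) * ((norm (avg_pt X - y))^2 + (norm (y - xstar))^2)
     + (8 * r * \<alpha>^2 / (1 - r)) * (\<Sum>j\<in>UNIV. (norm (g j (\<pi> j l) xstar))^2)"
proof -
  define K where "K j = \<alpha> *\<^sub>R g j (\<pi> j l) (X j)" for j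
  define C where "C = consensus_err X"
  define E where "E = (norm (avg_pt X - y))^2"
  define S where "S = (norm (y - xstar))^2"
  define G where "G = (\<Sum>j\<in>UNIV. (norm (g j (\<pi> j l) xstar))^2)"
  have r: "0 \<le> r" "r < 1" using r_nonneg r_less_1 .
  have "consensus_err (local_step \<pi> l X) \<le> r * consensus_err (\<lambda>j. X j - K j)"
    unfolding local_step_def r_def K_def by (rule consensus_err_mix_le[OF W_sym W_stoch])
  also have "\<dots> = (\<Sum>j\<in>UNIV. r * (norm ((X j - avg_pt X) - (K j - avg_pt K)))^2)"
    unfolding consensus_err_def sum_distrib_left avg_pt_diff by (simp add: algebra_simps)
  also have "\<dots> \<le> (\<Sum>j\<in>UNIV. (1 + 3 * r) / 4 * (norm (X j - avg_pt X))^2 + 4 * r / (1 - r) * (norm (K j - avg_pt K))^2)"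
    by (rule sum_mono) (rule power2_norm_diff_split_le[OF r])
  also have "\<dots> = (1 + 3 * r) / 4 * C + 4 * r / (1 - r) * consensus_err K"
    unfolding C_def consensus_err_def by (simp add: sum.distrib sum_distrib_left)
  also have "\<dots> \<le> (1 + 3 * r) / 4 * C + 4 * r / (1 - r) * (\<alpha>^2 * (2 * L^2 * (n * (2 * E + 2 * S) + C) + 2 * G))"
  proof -
    have "consensus_err K \<le> \<alpha>^2 * (\<Sum>j\<in>UNIV. (norm (g j (\<pi> j l) (X j)))^2)"
      using consensus_err_le_sum_power2_norm[of K] unfolding K_def
      by (simp add: power_mult_distrib sum_distrib_left)
    also have "\<dots> \<le> \<alpha>^2 * (2 * L^2 * (n * (2 * E + 2 * S) + C) + 2 * G)"
      unfolding E_def S_def C_def G_def by (intro mult_left_mono sum_power2_norm_grad_le[OF \<pi> l]) auto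
    finally show ?thesis using r by (intro add_left_mono mult_left_mono) auto
  qed
  also have "\<dots> = ((1 + 3 * r) / 4 + 8 * r * \<alpha>^2 * L^2 / (1 - r)) * C
      + (16 * r * \<alpha>^2 * L^2 * n / (1 - r)) * (E + S) + (8 * r * \<alpha>^2 / (1 - r)) * G"
    by (simp add: algebra_simps add_divide_distrib)
  also have "\<dots> \<le> (1 + r) / 2 * C + (16 * r * \<alpha>^2 * L^2 * n / (1 - r)) * (E + S) + (8 * r * \<alpha>^2 / (1 - r)) * G"
    using consensus_contraction_coeff consensus_err_nonneg[of X] unfolding C_def
    by (intro add_right_mono mult_right_mono)
  finally show ?thesis unfolding C_def E_def S_def G_def .
qed

section \<open>The Lyapunov function of an epoch\<close>

(* lyap_weight = n omega, with omega the weight of the consensus error in the paper's H_0. *)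
definition "lyap_weight = 16 * \<alpha> * L^2 / (\<mu> * (1 - r))"
definition "lyap_rate = 1 - \<alpha> * \<mu> / 2"
definition "cons_rate = (1 + r) / 2"
definition "cons_coupling = 16 * r * \<alpha>^2 * L^2 / (1 - r)"
definition "cons_noise = 8 * r * \<alpha>^2 / (1 - r)"
definition "sigma2 = (1 / (real m * n)) * (\<Sum>i\<in>UNIV. \<Sum>l<m. (norm (g i l xstar))^2)"

lemma lyap_weight_nonneg: "lyap_weight \<ge> 0" unfolding lyap_weight_def using alpha_pos mu_pos r_less_1 by simp
lemma cons_coupling_nonneg: "cons_coupling \<ge> 0" unfolding cons_coupling_def using r_nonneg r_less_1 by simp
lemma cons_noise_nonneg: "cons_noise \<ge> 0" unfolding cons_noise_def using r_nonneg r_less_1 by simp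
lemma sigma2_nonneg: "sigma2 \<ge> 0"
  unfolding sigma2_def using n_pos by (intro mult_nonneg_nonneg sum_nonneg) auto
lemma alpha_mu_le: "2 * (\<alpha> * \<mu>) \<le> 1 - r" using alpha_mu unfolding r_def by (simp add: field_simps)
lemma lyap_rate_bounds: "0 \<le> lyap_rate" "lyap_rate \<le> 1" unfolding lyap_rate_def using alpha_mu_le r_nonneg alpha_pos mu_pos by auto
lemma cons_rate_bounds: "0 \<le> cons_rate" "cons_rate < 1" unfolding cons_rate_def using r_nonneg r_less_1 by auto

lemma lyap_weight_coupling_le: "lyap_weight * cons_coupling \<le> \<alpha> * \<mu> / 2"
proof -
  have "512 * r * (\<alpha>^2 * L^4) \<le> 512 * (\<alpha>^2 * L^4)" using r_less_1 by (intro mult_right_mono) auto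
  also have "\<dots> \<le> (1 - r)^2 * \<mu>^2"
  proof -
    have "1920 * (\<alpha>^2 * L^4) \<le> (1 - r)^2 * \<mu>^2" using alpha_L unfolding r_def by (simp add: mult.assoc)
    moreover have "0 \<le> \<alpha>^2 * L^4" by simp
    ultimately show ?thesis by linarith
  qed
  finally have key: "512 * r * (\<alpha>^2 * L^4) \<le> (1 - r)^2 * \<mu>^2" .
  have pos: "\<mu> * (1 - r) * (1 - r) > 0" using r_less_1 mu_pos by simp
  have "lyap_weight * cons_coupling = (16 * \<alpha> * L^2 * (16 * r * \<alpha>^2 * L^2)) / (\<mu> * (1 - r) * (1 - r))"
    unfolding lyap_weight_def cons_coupling_def by (simp add: mult.assoc)
  also have "\<dots> \<le> \<alpha> * \<mu> / 2"
  proof (subst pos_divide_le_eq[OF pos])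
    have lhs: "16 * \<alpha> * L^2 * (16 * r * \<alpha>^2 * L^2) = (\<alpha> / 2) * (512 * r * (\<alpha>^2 * L^4))"
      by (simp add: power2_eq_square power4_eq_xxxx algebra_simps)
    have rhs: "\<alpha> * \<mu> / 2 * (\<mu> * (1 - r) * (1 - r)) = (\<alpha> / 2) * ((1 - r)^2 * \<mu>^2)"
      by (simp add: power2_eq_square algebra_simps)
    show "16 * \<alpha> * L^2 * (16 * r * \<alpha>^2 * L^2) \<le> \<alpha> * \<mu> / 2 * (\<mu> * (1 - r) * (1 - r))"
      unfolding lhs rhs using key alpha_pos by (intro mult_left_mono) auto
  qed
  finally show ?thesis .
qed

lemma lyap_weight_coupling_le_alpha_L: "lyap_weight * cons_coupling \<le> \<alpha> * L"
proof -
  have "\<alpha> * \<mu> \<le> \<alpha> * L" using alpha_pos mu_le_L by simp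
  then have "\<alpha> * \<mu> / 2 \<le> \<alpha> * L" using alpha_pos mu_pos by (simp add: field_simps)
  then show ?thesis using lyap_weight_coupling_le by linarith
qed

lemma lyap_weight_cons_rate_le: "2 * \<alpha> * L^2 / \<mu> + lyap_weight * cons_rate \<le> (1 - \<alpha> * \<mu> / 2) * lyap_weight"
proof -
  have pos: "1 - r > 0" using r_less_1 by simp
  have k: "\<alpha> * L^2 / \<mu> \<ge> 0" using alpha_pos mu_pos by simp
  have "2 + (8 + 8 * r) / (1 - r) = (2 * (1 - r) + (8 + 8 * r)) / (1 - r)"
    using pos by (simp add: field_simps)
  also have "\<dots> \<le> (16 - 8 * (\<alpha> * \<mu>)) / (1 - r)"
    using alpha_mu_le pos by (intro divide_right_mono) auto
  finally have "(2 + (8 + 8 * r) / (1 - r)) * (\<alpha> * L^2 / \<mu>) \<le> (16 - 8 * (\<alpha> * \<mu>)) / (1 - r) * (\<alpha> * L^2 / \<mu>)"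
    using k by (rule mult_right_mono)
  moreover have "lyap_weight * cons_rate = (8 + 8 * r) / (1 - r) * (\<alpha> * L^2 / \<mu>)"
    "(1 - \<alpha> * \<mu> / 2) * lyap_weight = (16 - 8 * (\<alpha> * \<mu>)) / (1 - r) * (\<alpha> * L^2 / \<mu>)"
    unfolding lyap_weight_def cons_rate_def using pos mu_pos by (simp_all add: field_simps)
  ultimately show ?thesis by (simp add: algebra_simps)
qed

(* The reference point follows the same recursion as the average, but with all gradients taken
   at the minimiser; it returns to xstar after a full epoch. *)
definition ref_point :: "('n \<Rightarrow> nat \<Rightarrow> nat) \<Rightarrow> nat \<Rightarrow> 'a" where
  "ref_point \<pi> k = xstar - (\<alpha> / n) *\<^sub>R (\<Sum>k'<k. \<Sum>j\<in>UNIV. g j (\<pi> j k') xstar)"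

definition "avg_gap \<pi> X l = (norm (avg_pt (drr_inner W \<alpha> g \<pi> X l) - ref_point \<pi> l))^2"
definition "cons_gap \<pi> X l = consensus_err (drr_inner W \<alpha> g \<pi> X l) / n"
definition "lyap \<pi> X l = avg_gap \<pi> X l + lyap_weight * cons_gap \<pi> X l"
definition "ref_gap \<pi> l = (norm (ref_point \<pi> l - xstar))^2"
definition "grad_sq \<pi> l = (\<Sum>j\<in>UNIV. (norm (g j (\<pi> j l) xstar))^2)"

lemma ref_point_0: "ref_point \<pi> 0 = xstar"
  unfolding ref_point_def by simp

lemma ref_point_Suc: "ref_point \<pi> (Suc l) = ref_point \<pi> l - (\<alpha> / n) *\<^sub>R (\<Sum>j\<in>UNIV. g j (\<pi> j l) xstar)"
  unfolding ref_point_def by (simp add: scaleR_add_right algebra_simps)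

lemma ref_point_m:
  assumes \<pi>: "\<pi> \<in> agent_perms m"
  shows "ref_point \<pi> m = xstar"
proof -
  have "(\<Sum>k<m. \<Sum>j\<in>UNIV. g j (\<pi> j k) xstar) = (\<Sum>j\<in>UNIV. \<Sum>k<m. g j (\<pi> j k) xstar)"
    by (rule sum.swap)
  also have "\<dots> = (\<Sum>j\<in>UNIV. \<Sum>k<m. g j k xstar)"
  proof (rule sum.cong[OF refl])
    fix j
    have "\<pi> j permutes {..<m}" using \<pi> unfolding agent_perms_def by simp
    from sum.permute[OF this, of "\<lambda>k. g j k xstar"] show "(\<Sum>k<m. g j (\<pi> j k) xstar) = (\<Sum>k<m. g j k xstar)"
      by (simp add: o_def)
  qed
  finally show ?thesis unfolding ref_point_def grad_sum_xstar by simp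
qed

lemma cons_gap_nonneg: "cons_gap \<pi> X l \<ge> 0"
  unfolding cons_gap_def by (intro divide_nonneg_pos consensus_err_nonneg n_pos)

lemma avg_gap_le_lyap: "avg_gap \<pi> X l \<le> lyap \<pi> X l"
  unfolding lyap_def using lyap_weight_nonneg cons_gap_nonneg by simp

lemma cons_gap_Suc:
  assumes \<pi>: "\<pi> \<in> agent_perms m" and l: "l < m"
  shows "cons_gap \<pi> X (Suc l) \<le> cons_rate * cons_gap \<pi> X l + cons_coupling * (avg_gap \<pi> X l + ref_gap \<pi> l) + cons_noise * (grad_sq \<pi> l / n)"
proof -
  have "cons_gap \<pi> X (Suc l) \<le> ((1 + r) / 2 * consensus_err (drr_inner W \<alpha> g \<pi> X l)
     + (16 * r * \<alpha>^2 * L^2 * n / (1 - r)) * (avg_gap \<pi> X l + ref_gap \<pi> l) + (8 * r * \<alpha>^2 / (1 - r)) * grad_sq \<pi> l) / n"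
    unfolding cons_gap_def drr_inner_Suc_local_step avg_gap_def ref_gap_def grad_sq_def
    using consensus_err_local_step[OF \<pi> l] n_pos by (simp add: divide_right_mono)
  also have "\<dots> = cons_rate * cons_gap \<pi> X l + cons_coupling * (avg_gap \<pi> X l + ref_gap \<pi> l) + cons_noise * (grad_sq \<pi> l / n)"
  proof -
    have "16 * r * \<alpha>^2 * L^2 * n / (1 - r) = cons_coupling * n" "8 * r * \<alpha>^2 / (1 - r) = cons_noise" "(1 + r) / 2 = cons_rate"
      unfolding cons_coupling_def cons_noise_def cons_rate_def by simp_all
    then show ?thesis unfolding cons_gap_def add_divide_distrib using n_pos by (simp add: field_simps)
  qed
  finally show ?thesis .
qed

lemma lyap_Suc:
  assumes \<pi>: "\<pi> \<in> agent_perms m" and l: "l < m"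
  shows "lyap \<pi> X (Suc l) \<le> lyap_rate * lyap \<pi> X l + 2 * (\<alpha> * L) * ref_gap \<pi> l + lyap_weight * cons_noise * (grad_sq \<pi> l / n)"
proof -
  have avg: "avg_gap \<pi> X (Suc l) \<le> (1 - \<alpha> * \<mu>) * avg_gap \<pi> X l + (\<alpha> * L) * ref_gap \<pi> l
      + (2 * \<alpha> * L^2 / \<mu>) * cons_gap \<pi> X l"
    unfolding avg_gap_def ref_gap_def cons_gap_def drr_inner_Suc_local_step ref_point_Suc
    using avg_err_local_step[OF \<pi> l] by simp
  have "lyap_weight * cons_coupling \<le> (\<alpha> * \<mu>) / 2" "2 * \<alpha> * L^2 / \<mu> + lyap_weight * cons_rate \<le> (1 - (\<alpha> * \<mu>) / 2) * lyap_weight"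
    using lyap_weight_coupling_le lyap_weight_cons_rate_le by simp_all
  from coupled_recursion_contraction[OF avg cons_gap_Suc[OF \<pi> l] lyap_weight_nonneg this(1) lyap_weight_coupling_le_alpha_L this(2)]
  show ?thesis unfolding lyap_def lyap_rate_def by (simp add: avg_gap_def ref_gap_def cons_gap_nonneg)
qed

section \<open>Expectation over the random permutations\<close>

lemma uniform_mean_grad_sq:
  assumes l: "l < m"
  shows "uniform_mean (agent_perms m) (\<lambda>\<pi>. grad_sq \<pi> l / n) = sigma2"
proof -
  have "uniform_mean (agent_perms m) (\<lambda>\<pi>. grad_sq \<pi> l / n)
      = (1 / n) * (\<Sum>j\<in>UNIV. uniform_mean (agent_perms m) (\<lambda>\<pi>. (norm (g j (\<pi> j l) xstar))^2))"
    using uniform_mean_cmult[of "agent_perms m" "1 / n" "\<lambda>\<pi>. grad_sq \<pi> l"]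
    unfolding grad_sq_def uniform_mean_sum by simp
  also have "\<dots> = (1 / n) * (\<Sum>j\<in>UNIV. (1 / real m) * (\<Sum>k<m. (norm (g j k xstar))^2))"
  proof (intro arg_cong[where f="\<lambda>x. (1 / n) * x"] sum.cong refl)
    fix j
    show "uniform_mean (agent_perms m) (\<lambda>\<pi>. (norm (g j (\<pi> j l) xstar))^2) = (1 / real m) * (\<Sum>k<m. (norm (g j k xstar))^2)"
      using uniform_mean_agent_perms_component[where \<phi>="\<lambda>p. (norm (g j (p l) xstar))^2" and j=j and m=m]
        uniform_mean_perms_value[OF l, of "\<lambda>k. (norm (g j k xstar))^2"] by simp
  qed
  also have "\<dots> = sigma2"
    unfolding sigma2_def by (simp add: sum_divide_distrib[symmetric])
  finally show ?thesis .
qed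

(* The reference point is displaced from xstar by partial sums of the gradients at xstar along
   each agent's permutation. After centring each agent's gradients (the means cancel across agents)
   these are sums of samples drawn without replacement. *)
lemma uniform_mean_ref_gap_le:
  assumes l: "l \<le> m"
  shows "uniform_mean (agent_perms m) (\<lambda>\<pi>. ref_gap \<pi> l) \<le> \<alpha>^2 * (real m * sigma2)"
proof -
  define gb where "gb j = (1 / real m) *\<^sub>R (\<Sum>k<m. g j k xstar)" for j
  define c where "c j k = g j k xstar - gb j" for j k
  define v where "v j p = (\<Sum>k<l. c j (p k))" for j and p :: "nat \<Rightarrow> nat"
  have gb0: "(\<Sum>j\<in>UNIV. gb j) = 0"
    unfolding gb_def using grad_sum_xstar by (simp add: scaleR_sum_right[symmetric])
  have pointwise: "ref_gap \<pi> l \<le> (\<alpha> / n)^2 * (n * (\<Sum>j\<in>UNIV. (norm (v j (\<pi> j)))^2))" for \<pi>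
  proof -
    have "(\<Sum>k<l. \<Sum>j\<in>UNIV. g j (\<pi> j k) xstar) = (\<Sum>j\<in>UNIV. \<Sum>k<l. c j (\<pi> j k) + gb j)"
      unfolding c_def by (subst sum.swap) simp
    also have "\<dots> = (\<Sum>j\<in>UNIV. v j (\<pi> j))"
      unfolding v_def using gb0 by (simp add: sum.distrib scaleR_sum_right[symmetric] sum_constant_scaleR)
    finally have "ref_gap \<pi> l = (\<alpha> / n)^2 * (norm (\<Sum>j\<in>UNIV. v j (\<pi> j)))^2"
      unfolding ref_gap_def ref_point_def using alpha_pos n_pos by (simp add: power_mult_distrib power_divide)
    also have "\<dots> \<le> (\<alpha> / n)^2 * (n * (\<Sum>j\<in>UNIV. (norm (v j (\<pi> j)))^2))"
      using power2_norm_sum_le[of "UNIV :: 'n set" "\<lambda>j. v j (\<pi> j)"] unfolding n_def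
      by (intro mult_left_mono) auto
    finally show ?thesis .
  qed
  have sample: "uniform_mean (perms m) (\<lambda>p. (norm (v j p))^2) \<le> (\<Sum>k<m. (norm (g j k xstar))^2)" for j
    unfolding v_def c_def gb_def by (rule uniform_mean_perms_centred_partial_sum_le[OF l m_pos])
  have "uniform_mean (agent_perms m) (\<lambda>\<pi>. ref_gap \<pi> l)
      \<le> uniform_mean (agent_perms m) (\<lambda>\<pi>. (\<alpha> / n)^2 * (n * (\<Sum>j\<in>UNIV. (norm (v j (\<pi> j)))^2)))"
    by (rule uniform_mean_mono[OF finite_agent_perms pointwise])
  also have "\<dots> = (\<alpha> / n)^2 * (n * (\<Sum>j\<in>UNIV. uniform_mean (perms m) (\<lambda>p. (norm (v j p))^2)))"
    by (simp add: uniform_mean_cmult uniform_mean_sum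
        uniform_mean_agent_perms_component[where \<phi>="\<lambda>p. (norm (v _ p))^2"])
  also have "\<dots> \<le> (\<alpha> / n)^2 * (n * (\<Sum>j\<in>UNIV. \<Sum>k<m. (norm (g j k xstar))^2))"
    using sample n_pos by (intro mult_left_mono sum_mono) auto
  also have "\<dots> = \<alpha>^2 * (real m * sigma2)"
    unfolding sigma2_def using n_pos m_pos by (simp add: power2_eq_square field_simps)
  finally show ?thesis .
qed

definition "lyap0 X = (norm (avg_pt X - xstar))^2 + lyap_weight * (consensus_err X / n)"
(* The fixed points of the expected per-step recursions for lyap and cons_gap. *)
definition "lyap_floor = (2 * (\<alpha> * L) * (\<alpha>^2 * (real m * sigma2)) + lyap_weight * cons_noise * sigma2) / (\<alpha> * \<mu> / 2)"
definition "cons_floor V = (cons_coupling * (V + lyap_floor + \<alpha>^2 * (real m * sigma2)) + cons_noise * sigma2) / (1 - cons_rate)"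

lemma lyap0_nonneg: "lyap0 X \<ge> 0"
  unfolding lyap0_def
  by (intro add_nonneg_nonneg zero_le_power2 mult_nonneg_nonneg lyap_weight_nonneg divide_nonneg_pos consensus_err_nonneg n_pos)

lemma lyap_floor_nonneg: "lyap_floor \<ge> 0"
  unfolding lyap_floor_def using alpha_pos mu_pos L_pos lyap_weight_nonneg cons_noise_nonneg sigma2_nonneg by simp

lemma cons_floor_nonneg: "V \<ge> 0 \<Longrightarrow> cons_floor V \<ge> 0"
  unfolding cons_floor_def using cons_coupling_nonneg cons_noise_nonneg lyap_floor_nonneg sigma2_nonneg cons_rate_bounds by simp

lemma cons_floor_affine: "cons_floor V = cons_coupling / (1 - cons_rate) * V + cons_floor 0"
  unfolding cons_floor_def by (simp add: add_divide_distrib distrib_left)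

lemma uniform_mean_lyap_le:
  assumes "l \<le> m"
  shows "uniform_mean (agent_perms m) (\<lambda>\<pi>. lyap \<pi> X l) \<le> lyap_rate^l * lyap0 X + (1 - lyap_rate^l) * lyap_floor"
  using assms
proof (induction l)
  case 0
  then show ?case
    by (simp add: lyap_def avg_gap_def cons_gap_def lyap0_def ref_point_0
        uniform_mean_const[OF finite_agent_perms agent_perms_nonempty])
next
  case (Suc l)
  then have l: "l < m" by simp
  have "uniform_mean (agent_perms m) (\<lambda>\<pi>. lyap \<pi> X (Suc l))
      \<le> uniform_mean (agent_perms m) (\<lambda>\<pi>. lyap_rate * lyap \<pi> X l + (2 * (\<alpha> * L) * ref_gap \<pi> l + lyap_weight * cons_noise * (grad_sq \<pi> l / n)))"
    using lyap_Suc[OF _ l] by (intro uniform_mean_mono[OF finite_agent_perms]) (simp add: add.assoc)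
  also have "\<dots> = lyap_rate * uniform_mean (agent_perms m) (\<lambda>\<pi>. lyap \<pi> X l)
      + (2 * (\<alpha> * L) * uniform_mean (agent_perms m) (\<lambda>\<pi>. ref_gap \<pi> l) + lyap_weight * cons_noise * sigma2)"
    by (simp only: uniform_mean_add uniform_mean_cmult uniform_mean_grad_sq[OF l])
  also have "\<dots> \<le> lyap_rate * (lyap_rate^l * lyap0 X + (1 - lyap_rate^l) * lyap_floor)
      + (2 * (\<alpha> * L) * (\<alpha>^2 * (real m * sigma2)) + lyap_weight * cons_noise * sigma2)"
    using Suc.IH l lyap_rate_bounds uniform_mean_ref_gap_le[of l] alpha_pos L_pos
    by (intro add_mono mult_left_mono add_right_mono) auto
  also have "\<dots> = lyap_rate^(Suc l) * lyap0 X + (1 - lyap_rate^(Suc l)) * lyap_floor"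
    unfolding lyap_floor_def lyap_rate_def using alpha_pos mu_pos by (simp add: field_simps)
  finally show ?case .
qed

lemma uniform_mean_cons_gap_le:
  assumes "l \<le> m"
  shows "uniform_mean (agent_perms m) (\<lambda>\<pi>. cons_gap \<pi> X l)
    \<le> cons_rate^l * (consensus_err X / n) + (1 - cons_rate^l) * cons_floor (lyap0 X)"
  using assms
proof (induction l)
  case 0
  then show ?case
    by (simp add: cons_gap_def uniform_mean_const[OF finite_agent_perms agent_perms_nonempty])
next
  case (Suc l)
  then have l: "l < m" by simp
  have "cons_gap \<pi> X (Suc l) \<le> cons_rate * cons_gap \<pi> X l + (cons_coupling * lyap \<pi> X l + cons_coupling * ref_gap \<pi> l + cons_noise * (grad_sq \<pi> l / n))"
    if "\<pi> \<in> agent_perms m" for \<pi>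
    using cons_gap_Suc[OF that l, of X] mult_left_mono[OF avg_gap_le_lyap cons_coupling_nonneg, of \<pi> X l]
    unfolding distrib_left by linarith
  then have "uniform_mean (agent_perms m) (\<lambda>\<pi>. cons_gap \<pi> X (Suc l))
      \<le> uniform_mean (agent_perms m) (\<lambda>\<pi>. cons_rate * cons_gap \<pi> X l + (cons_coupling * lyap \<pi> X l + cons_coupling * ref_gap \<pi> l + cons_noise * (grad_sq \<pi> l / n)))"
    by (intro uniform_mean_mono[OF finite_agent_perms])
  also have "\<dots> = cons_rate * uniform_mean (agent_perms m) (\<lambda>\<pi>. cons_gap \<pi> X l)
      + (cons_coupling * uniform_mean (agent_perms m) (\<lambda>\<pi>. lyap \<pi> X l) + cons_coupling * uniform_mean (agent_perms m) (\<lambda>\<pi>. ref_gap \<pi> l)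
         + cons_noise * sigma2)"
    by (simp only: uniform_mean_add uniform_mean_cmult uniform_mean_grad_sq[OF l])
  also have "\<dots> \<le> cons_rate * (cons_rate^l * (consensus_err X / n) + (1 - cons_rate^l) * cons_floor (lyap0 X))
      + (cons_coupling * (lyap0 X + lyap_floor) + cons_coupling * (\<alpha>^2 * (real m * sigma2)) + cons_noise * sigma2)"
  proof -
    have "lyap_rate^l * lyap0 X + (1 - lyap_rate^l) * lyap_floor \<le> lyap0 X + lyap_floor"
      using lyap_rate_bounds lyap0_nonneg lyap_floor_nonneg by (intro convex_comb_le) (simp_all add: power_le_one)
    then have "uniform_mean (agent_perms m) (\<lambda>\<pi>. lyap \<pi> X l) \<le> lyap0 X + lyap_floor"
      using uniform_mean_lyap_le[of l X] l by linarith
    then show ?thesis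
      using Suc.IH l cons_rate_bounds cons_coupling_nonneg uniform_mean_ref_gap_le[of l]
      by (intro add_mono mult_left_mono add_right_mono) auto
  qed
  also have "\<dots> = cons_rate^(Suc l) * (consensus_err X / n) + (1 - cons_rate^(Suc l)) * cons_floor (lyap0 X)"
    unfolding cons_floor_def using cons_rate_bounds by (simp add: field_simps)
  finally show ?case .
qed

lemma uniform_mean_lyap0_epoch:
  "uniform_mean (agent_perms m) (\<lambda>\<pi>. lyap0 (drr_inner W \<alpha> g \<pi> X m)) \<le> lyap_rate^m * lyap0 X + (1 - lyap_rate^m) * lyap_floor"
proof -
  have "uniform_mean (agent_perms m) (\<lambda>\<pi>. lyap0 (drr_inner W \<alpha> g \<pi> X m))
      \<le> uniform_mean (agent_perms m) (\<lambda>\<pi>. lyap \<pi> X m)"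
    by (intro uniform_mean_mono[OF finite_agent_perms])
      (simp add: lyap_def avg_gap_def cons_gap_def lyap0_def ref_point_m)
  also have "\<dots> \<le> lyap_rate^m * lyap0 X + (1 - lyap_rate^m) * lyap_floor" by (rule uniform_mean_lyap_le) simp
  finally show ?thesis .
qed

lemma uniform_mean_consensus_err_epoch:
  "uniform_mean (agent_perms m) (\<lambda>\<pi>. consensus_err (drr_inner W \<alpha> g \<pi> X m) / n)
    \<le> cons_rate^m * (consensus_err X / n) + (1 - cons_rate^m) * cons_floor (lyap0 X)"
  using uniform_mean_cons_gap_le[of m X] unfolding cons_gap_def by simp

lemma expect_lyap0_le:
  "expect_sched m t (\<lambda>\<sigma>. lyap0 (drr_iter W \<alpha> g m \<sigma> x0 t)) \<le> lyap_rate^(m * t) * lyap0 x0 + (1 - lyap_rate^(m * t)) * lyap_floor"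
proof (induction t)
  case 0
  then show ?case by (simp add: expect_sched_0)
next
  case (Suc t)
  have "expect_sched m (Suc t) (\<lambda>\<sigma>. lyap0 (drr_iter W \<alpha> g m \<sigma> x0 (Suc t)))
      = expect_sched m t (\<lambda>\<sigma>. uniform_mean (agent_perms m) (\<lambda>\<pi>. lyap0 (drr_inner W \<alpha> g \<pi> (drr_iter W \<alpha> g m \<sigma> x0 t) m)))"
    by (simp add: expect_sched_Suc drr_iter_fun_upd)
  also have "\<dots> \<le> expect_sched m t (\<lambda>\<sigma>. lyap_rate^m * lyap0 (drr_iter W \<alpha> g m \<sigma> x0 t) + (1 - lyap_rate^m) * lyap_floor)"
    by (rule expect_sched_mono) (rule uniform_mean_lyap0_epoch)
  also have "\<dots> = lyap_rate^m * expect_sched m t (\<lambda>\<sigma>. lyap0 (drr_iter W \<alpha> g m \<sigma> x0 t)) + (1 - lyap_rate^m) * lyap_floor"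
    by (rule expect_sched_affine)
  also have "\<dots> \<le> lyap_rate^m * (lyap_rate^(m * t) * lyap0 x0 + (1 - lyap_rate^(m * t)) * lyap_floor) + (1 - lyap_rate^m) * lyap_floor"
    using Suc.IH lyap_rate_bounds by (intro add_right_mono mult_left_mono) auto
  also have "\<dots> = lyap_rate^(m * Suc t) * lyap0 x0 + (1 - lyap_rate^(m * Suc t)) * lyap_floor"
    by (simp add: power_add algebra_simps)
  finally show ?case .
qed

lemma expect_consensus_err_le:
  "expect_sched m t (\<lambda>\<sigma>. consensus_err (drr_iter W \<alpha> g m \<sigma> x0 t) / n)
    \<le> cons_rate^(m * t) * (consensus_err x0 / n) + (1 - cons_rate^(m * t)) * cons_floor (lyap0 x0 + lyap_floor)"
proof (induction t)
  case 0
  then show ?case by (simp add: expect_sched_0)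
next
  case (Suc t)
  let ?X = "\<lambda>\<sigma>. drr_iter W \<alpha> g m \<sigma> x0 t"
  let ?c = "1 - cons_rate^m"
  let ?\<kappa> = "cons_coupling / (1 - cons_rate)"
  have \<kappa>: "?c * ?\<kappa> \<ge> 0" using cons_rate_bounds cons_coupling_nonneg by (simp add: power_le_one)
  have "expect_sched m (Suc t) (\<lambda>\<sigma>. consensus_err (drr_iter W \<alpha> g m \<sigma> x0 (Suc t)) / n)
      = expect_sched m t (\<lambda>\<sigma>. uniform_mean (agent_perms m) (\<lambda>\<pi>. consensus_err (drr_inner W \<alpha> g \<pi> (?X \<sigma>) m) / n))"
    by (simp add: expect_sched_Suc drr_iter_fun_upd)
  also have "\<dots> \<le> expect_sched m t (\<lambda>\<sigma>. cons_rate^m * (consensus_err (?X \<sigma>) / n)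
      + (?c * ?\<kappa> * lyap0 (?X \<sigma>) + ?c * cons_floor 0))"
    by (rule expect_sched_mono, rule order.trans[OF uniform_mean_consensus_err_epoch])
      (simp add: cons_floor_affine[of "lyap0 _"] algebra_simps)
  also have "\<dots> = cons_rate^m * expect_sched m t (\<lambda>\<sigma>. consensus_err (?X \<sigma>) / n)
      + (?c * ?\<kappa> * expect_sched m t (\<lambda>\<sigma>. lyap0 (?X \<sigma>)) + ?c * cons_floor 0)"
    unfolding expect_sched_eq_uniform_mean
    by (simp only: uniform_mean_add uniform_mean_cmult uniform_mean_const[OF finite_schedules schedules_nonempty])
  also have "\<dots> \<le> cons_rate^m * (cons_rate^(m * t) * (consensus_err x0 / n) + (1 - cons_rate^(m * t)) * cons_floor (lyap0 x0 + lyap_floor))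
      + (?c * ?\<kappa> * (lyap0 x0 + lyap_floor) + ?c * cons_floor 0)"
  proof -
    have "lyap_rate^(m * t) * lyap0 x0 + (1 - lyap_rate^(m * t)) * lyap_floor \<le> lyap0 x0 + lyap_floor"
      using lyap_rate_bounds lyap0_nonneg lyap_floor_nonneg by (intro convex_comb_le) (simp_all add: power_le_one)
    then have "expect_sched m t (\<lambda>\<sigma>. lyap0 (?X \<sigma>)) \<le> lyap0 x0 + lyap_floor"
      using expect_lyap0_le[of t x0] by linarith
    then show ?thesis
      using Suc.IH cons_rate_bounds \<kappa> by (intro add_mono mult_left_mono add_right_mono) auto
  qed
  also have "?c * ?\<kappa> * (lyap0 x0 + lyap_floor) + ?c * cons_floor 0 = ?c * cons_floor (lyap0 x0 + lyap_floor)"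
    by (subst cons_floor_affine[of "lyap0 x0 + lyap_floor"]) (simp only: distrib_left mult.assoc)
  also have "cons_rate^m * (cons_rate^(m * t) * (consensus_err x0 / n) + (1 - cons_rate^(m * t)) * cons_floor (lyap0 x0 + lyap_floor))
      + ?c * cons_floor (lyap0 x0 + lyap_floor)
      = cons_rate^(m * Suc t) * (consensus_err x0 / n) + (1 - cons_rate^(m * Suc t)) * cons_floor (lyap0 x0 + lyap_floor)"
    by (simp add: power_add algebra_simps)
  finally show ?case .
qed

lemma expect_mean_sq_dist_le:
  "(1 / n) * (\<Sum>i\<in>UNIV. expect_sched m t (\<lambda>\<sigma>. (norm (drr_iter W \<alpha> g m \<sigma> x0 t i - xstar))^2))
   \<le> lyap_rate^(m * t) * lyap0 x0 + lyap_floor + cons_rate^(m * t) * (consensus_err x0 / n) + cons_floor (lyap0 x0 + lyap_floor)"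
proof -
  let ?X = "\<lambda>\<sigma>. drr_iter W \<alpha> g m \<sigma> x0 t"
  have "(1 / n) * (\<Sum>i\<in>UNIV. expect_sched m t (\<lambda>\<sigma>. (norm (?X \<sigma> i - xstar))^2))
      = expect_sched m t (\<lambda>\<sigma>. (norm (avg_pt (?X \<sigma>) - xstar))^2 + consensus_err (?X \<sigma>) / n)"
    unfolding expect_sched_eq_uniform_mean uniform_mean_sum[symmetric] uniform_mean_cmult[symmetric]
      sum_power2_norm_diff_avg_pt n_def by (simp add: field_simps)
  also have "\<dots> \<le> expect_sched m t (\<lambda>\<sigma>. lyap0 (?X \<sigma>) + consensus_err (?X \<sigma>) / n)"
    by (intro expect_sched_mono add_right_mono)
      (auto simp: lyap0_def intro!: mult_nonneg_nonneg divide_nonneg_pos lyap_weight_nonneg consensus_err_nonneg n_pos)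
  also have "\<dots> = expect_sched m t (\<lambda>\<sigma>. lyap0 (?X \<sigma>)) + expect_sched m t (\<lambda>\<sigma>. consensus_err (?X \<sigma>) / n)"
    unfolding expect_sched_eq_uniform_mean by (rule uniform_mean_add)
  also have "\<dots> \<le> (lyap_rate^(m * t) * lyap0 x0 + (1 - lyap_rate^(m * t)) * lyap_floor)
      + (cons_rate^(m * t) * (consensus_err x0 / n) + (1 - cons_rate^(m * t)) * cons_floor (lyap0 x0 + lyap_floor))"
    using expect_lyap0_le expect_consensus_err_le by (rule add_mono)
  also have "\<dots> \<le> lyap_rate^(m * t) * lyap0 x0 + lyap_floor + cons_rate^(m * t) * (consensus_err x0 / n) + cons_floor (lyap0 x0 + lyap_floor)"
  proof -
    have "(1 - lyap_rate^(m * t)) * lyap_floor \<le> lyap_floor"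
      using lyap_rate_bounds lyap_floor_nonneg by (intro mult_left_le_one_le) (auto simp: power_le_one)
    moreover have "(1 - cons_rate^(m * t)) * cons_floor (lyap0 x0 + lyap_floor) \<le> cons_floor (lyap0 x0 + lyap_floor)"
      using cons_rate_bounds cons_floor_nonneg[OF add_nonneg_nonneg[OF lyap0_nonneg lyap_floor_nonneg]]
      by (intro mult_left_le_one_le) (auto simp: power_le_one)
    ultimately show ?thesis by linarith
  qed
  finally show ?thesis .
qed

lemma lyap_floor_eq: "lyap_floor = 4 * \<alpha>^2 / \<mu> * (real m * L + 64 * r * L^2 / (\<mu> * (1 - r)^2)) * sigma2"
proof -
  have "1 - r \<noteq> 0" using r_less_1 by simp
  then show ?thesis
    unfolding lyap_floor_def lyap_weight_def cons_noise_def using alpha_pos mu_pos by (simp add: field_simps power2_eq_square)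
qed

lemma lyap_floor_le: "lyap_floor \<le> 4 * \<alpha>^2 / \<mu> * (real m * L + 240 * r * L^2 / (\<mu> * (1 - r)^2)) * sigma2"
proof -
  have "64 * r * L^2 / (\<mu> * (1 - r)^2) \<le> 240 * r * L^2 / (\<mu> * (1 - r)^2)"
    using r_nonneg mu_pos r_less_1 by (intro divide_right_mono) auto
  then show ?thesis unfolding lyap_floor_eq
    using mu_pos sigma2_nonneg by (intro mult_right_mono mult_left_mono) auto
qed

lemma cons_floor_eq:
  "cons_floor V = \<alpha>^2 / (1 - r)^2 * (32 * r * L^2 * (V + lyap_floor + \<alpha>^2 * (real m * sigma2)) + 16 * r * sigma2)"
proof -
  define k where "k = 1 / (1 - r)"
  have "1 - r \<noteq> 0" using r_less_1 by simp
  then have "cons_coupling = 16 * r * \<alpha>^2 * L^2 * k" "cons_noise = 8 * r * \<alpha>^2 * k" "1 / (1 - cons_rate) = 2 * k"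
      "\<alpha>^2 / (1 - r)^2 = \<alpha>^2 * k^2"
    unfolding cons_coupling_def cons_noise_def cons_rate_def k_def by (simp_all add: field_simps power2_eq_square)
  moreover have "cons_floor V = (cons_coupling * (V + lyap_floor + \<alpha>^2 * (real m * sigma2)) + cons_noise * sigma2) * (1 / (1 - cons_rate))"
    unfolding cons_floor_def by simp
  ultimately show ?thesis by (simp add: algebra_simps power2_eq_square)
qed

lemma lyap_floor_cross_term_le: "64 * r * L^2 * lyap_floor \<le> (256 / 1920) * (real m * sigma2) + (16384 / 1920) * sigma2"
proof -
  define D where "D = 1 - r"
  define Z where "Z = \<alpha>^2 * L^4"
  have D: "0 < D" "D \<le> 1" unfolding D_def using r_less_1 r_nonneg by auto
  have Z: "1920 * Z \<le> D^2 * \<mu>^2" unfolding Z_def D_def using alpha_L unfolding r_def by (simp add: mult.assoc)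
  have ms: "real m * sigma2 \<ge> 0" using sigma2_nonneg by simp
  have eq: "64 * r * L^2 * lyap_floor = (256 * r * (real m * sigma2) / (\<mu> * L)) * Z + (16384 * r^2 * sigma2 / (\<mu>^2 * D^2)) * Z"
    unfolding lyap_floor_eq Z_def D_def[symmetric] using mu_pos L_pos D
    by (simp add: field_simps power2_eq_square power4_eq_xxxx)
  have "(256 * r * (real m * sigma2) / (\<mu> * L)) * Z \<le> (256 * r * (real m * sigma2) / (\<mu> * L)) * (D^2 * \<mu>^2 / 1920)"
    using Z r_nonneg ms mu_pos L_pos by (intro mult_left_mono) auto
  also have "\<dots> = (256 / 1920) * (r * D^2 * (\<mu> / L)) * (real m * sigma2)"
    using mu_pos L_pos by (simp add: field_simps power2_eq_square)
  also have "\<dots> \<le> (256 / 1920) * 1 * (real m * sigma2)"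
  proof -
    have "r * D^2 * (\<mu> / L) \<le> 1 * 1 * 1"
      using r_nonneg r_less_1 D mu_pos mu_le_L L_pos by (intro mult_mono) (auto simp: power_le_one)
    then show ?thesis using ms by (intro mult_right_mono mult_left_mono) auto
  qed
  finally have t1: "(256 * r * (real m * sigma2) / (\<mu> * L)) * Z \<le> (256 / 1920) * (real m * sigma2)" by simp
  have "(16384 * r^2 * sigma2 / (\<mu>^2 * D^2)) * Z \<le> (16384 * r^2 * sigma2 / (\<mu>^2 * D^2)) * (D^2 * \<mu>^2 / 1920)"
    using Z sigma2_nonneg by (intro mult_left_mono) auto
  also have "\<dots> = (16384 / 1920) * r^2 * sigma2" using mu_pos D by (simp add: field_simps)
  also have "\<dots> \<le> (16384 / 1920) * 1 * sigma2"
    using r_nonneg r_less_1 sigma2_nonneg by (intro mult_right_mono mult_left_mono) (auto simp: power_le_one)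
  finally have t2: "(16384 * r^2 * sigma2 / (\<mu>^2 * D^2)) * Z \<le> (16384 / 1920) * sigma2" by simp
  show ?thesis unfolding eq using t1 t2 by linarith
qed

lemma shuffling_term_le: "32 * r * L^2 * (\<alpha>^2 * (real m * sigma2)) \<le> (32 / 1920) * (real m * sigma2)"
proof -
  have "(1 - r)^2 \<le> 1" using r_nonneg r_less_1 by (simp add: power_le_one)
  then have "\<alpha>^2 * L^2 \<le> 1 / 1920" using alpha_L_le by simp
  then have "r * (\<alpha>^2 * L^2) \<le> 1 * (1 / 1920)" using r_nonneg r_less_1 by (intro mult_mono) auto
  then have "32 * (r * (\<alpha>^2 * L^2)) * (real m * sigma2) \<le> 32 * (1 / 1920) * (real m * sigma2)"
    using sigma2_nonneg by (intro mult_right_mono mult_left_mono) auto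
  then show ?thesis by (simp add: algebra_simps)
qed

lemma sigma2_terms_le:
  "3360 * (real m * sigma2) + 3360 * sigma2 \<le> 120 * L^2 * (28 * (real m * \<mu> + L) * sigma2 / (\<mu> * L^2)) / (1 - r)"
proof -
  define X where "X = 3360 * (real m * sigma2) + 3360 * (L / \<mu>) * sigma2"
  have X: "0 \<le> X" unfolding X_def using sigma2_nonneg mu_pos L_pos by simp
  have "3360 * sigma2 \<le> 3360 * (L / \<mu>) * sigma2"
    using mu_pos mu_le_L sigma2_nonneg by (simp add: field_simps mult_right_mono)
  then have "3360 * (real m * sigma2) + 3360 * sigma2 \<le> X" unfolding X_def by simp
  also have "\<dots> \<le> X / (1 - r)"
    using X r_nonneg r_less_1 by (simp add: le_divide_eq mult_left_le)
  also have "X = 120 * L^2 * (28 * (real m * \<mu> + L) * sigma2 / (\<mu> * L^2))"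
    unfolding X_def using mu_pos L_pos by (simp add: field_simps power2_eq_square)
  finally show ?thesis .
qed

lemma cons_floor_le:
  assumes H: "H \<ge> 0"
  shows "cons_floor (H + lyap_floor) \<le> 4 * (30 * n * L^2 / (1 - r) * (H + 28 * (real m * \<mu> + L) * sigma2 / (\<mu> * L^2))
            + 15 * n * r / (1 - r) * sigma2 + real m * n * \<mu> * (1 - r) / (8 * L) * sigma2) / (n * (1 - r)^2) * \<alpha>^2"
proof -
  define D where "D = 1 - r"
  have D: "0 < D" "D \<le> 1" unfolding D_def using r_less_1 r_nonneg by auto
  define B where "B = 32 * r * L^2 * H + 64 * r * L^2 * lyap_floor + 32 * r * L^2 * (\<alpha>^2 * (real m * sigma2)) + 16 * r * sigma2"
  define R where "R = 120 * L^2 * H / D + 120 * L^2 * (28 * (real m * \<mu> + L) * sigma2 / (\<mu> * L^2)) / D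
      + 60 * r * sigma2 / D + real m * \<mu> * D * sigma2 / (2 * L)"
  have floor_eq: "cons_floor (H + lyap_floor) = \<alpha>^2 / D^2 * B"
    unfolding cons_floor_eq B_def D_def by (simp add: algebra_simps)
  have bound_eq: "4 * (30 * n * L^2 / (1 - r) * (H + 28 * (real m * \<mu> + L) * sigma2 / (\<mu> * L^2))
      + 15 * n * r / (1 - r) * sigma2 + real m * n * \<mu> * (1 - r) / (8 * L) * sigma2) / (n * (1 - r)^2) * \<alpha>^2
      = \<alpha>^2 / D^2 * R"
    unfolding R_def D_def[symmetric] using n_pos D L_pos mu_pos by (simp add: field_simps power2_eq_square)
  have "B \<le> R"
  proof -
    have "32 * r * L^2 * H \<le> 120 * L^2 * H"
      using r_nonneg r_less_1 H by (intro mult_right_mono) auto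
    also have "\<dots> \<le> 120 * L^2 * H / D" using D H by (simp add: le_divide_eq mult_left_le)
    finally have "32 * r * L^2 * H \<le> 120 * L^2 * H / D" .
    moreover have "16 * r * sigma2 \<le> 60 * r * sigma2 / D"
    proof -
      have "16 * r * sigma2 \<le> 60 * r * sigma2" using r_nonneg sigma2_nonneg by (intro mult_right_mono) auto
      also have "\<dots> \<le> 60 * r * sigma2 / D" using D r_nonneg sigma2_nonneg by (simp add: le_divide_eq mult_left_le)
      finally show ?thesis .
    qed
    moreover have "0 \<le> real m * \<mu> * D * sigma2 / (2 * L)" using mu_pos D sigma2_nonneg L_pos by simp
    moreover have "real m * sigma2 \<ge> 0" using sigma2_nonneg by simp
    ultimately show ?thesis
      unfolding B_def R_def using lyap_floor_cross_term_le shuffling_term_le sigma2_terms_le sigma2_nonneg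
      unfolding D_def by linarith
  qed
  then have "\<alpha>^2 / D^2 * B \<le> \<alpha>^2 / D^2 * R" by (intro mult_left_mono) auto
  then show ?thesis unfolding floor_eq bound_eq .
qed

lemma lyap0_eq: "lyap0 X = (norm (avg_pt X - xstar))^2 + 16 * \<alpha> * L^2 / (n * \<mu> * (1 - r)) * consensus_err X"
  unfolding lyap0_def lyap_weight_def by (simp add: field_simps)

lemma mean_sq_dist_bound:
  "(1 / n) * (\<Sum>i\<in>UNIV. expect_sched m t (\<lambda>\<sigma>. (norm (drr_iter W \<alpha> g m \<sigma> x0 t i - xstar))^2))
   \<le> (1 - \<alpha> * \<mu> / 4) ^ (m * t) * lyap0 x0
     + 4 * \<alpha>^2 / \<mu> * (real m * L + 240 * r * L^2 / (\<mu> * (1 - r)^2)) * sigma2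
     + ((1 + r) / 2) ^ (m * t) * consensus_err x0 / n
     + 4 * (30 * n * L^2 / (1 - r) * (lyap0 x0 + 28 * (real m * \<mu> + L) * sigma2 / (\<mu> * L^2))
            + 15 * n * r / (1 - r) * sigma2 + real m * n * \<mu> * (1 - r) / (8 * L) * sigma2)
       / (n * (1 - r)^2) * \<alpha>^2"
proof -
  have "lyap_rate^(m * t) * lyap0 x0 \<le> (1 - \<alpha> * \<mu> / 4) ^ (m * t) * lyap0 x0"
    using lyap_rate_bounds lyap0_nonneg alpha_pos mu_pos unfolding lyap_rate_def by (intro mult_right_mono power_mono) auto
  then show ?thesis
    using expect_mean_sq_dist_le[of t x0] lyap_floor_le cons_floor_le[OF lyap0_nonneg, of x0]
    unfolding cons_rate_def by simp
qed

end

lemma grad_sum_eq_0_at_minimiser: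
  fixes f :: "'n::finite \<Rightarrow> nat \<Rightarrow> 'a::real_inner \<Rightarrow> real" and g :: "'n \<Rightarrow> nat \<Rightarrow> 'a \<Rightarrow> 'a"
  assumes m_pos: "m \<ge> 1"
    and grad: "\<And>i l x. l < m \<Longrightarrow> (f i l has_derivative (\<lambda>h. g i l x \<bullet> h)) (at x)"
    and lip: "\<And>i l. l < m \<Longrightarrow> L-lipschitz_on UNIV (g i l)" and L_pos: "L > 0"
    and xstar_min: "\<And>y. (1 / real CARD('n)) * (\<Sum>i\<in>UNIV. (1 / real m) * (\<Sum>l<m. f i l xstar))
                      \<le> (1 / real CARD('n)) * (\<Sum>i\<in>UNIV. (1 / real m) * (\<Sum>l<m. f i l y))"
  shows "(\<Sum>i\<in>UNIV. \<Sum>l<m. g i l xstar) = 0"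
proof (rule gradient_eq_0_if_minimum)
  let ?F = "\<lambda>y. \<Sum>i\<in>UNIV. \<Sum>l<m. f i l y"
  show "?F xstar \<le> ?F y" for y
    using xstar_min[of y] m_pos by (simp add: sum_divide_distrib[symmetric] divide_le_cancel)
  show "?F y \<le> ?F xstar + (\<Sum>i\<in>UNIV. \<Sum>l<m. g i l xstar) \<bullet> (y - xstar)
      + real CARD('n) * real m * L / 2 * (norm (y - xstar))^2" for y
  proof -
    have "?F y \<le> (\<Sum>i\<in>UNIV. \<Sum>l<m. f i l xstar + g i l xstar \<bullet> (y - xstar) + L / 2 * (norm (y - xstar))^2)"
      by (intro sum_mono lipschitz_gradient_upper_bound[OF grad lip]) auto
    then show ?thesis by (simp add: sum.distrib inner_sum_left)
  qed
  show "real CARD('n) * real m * L > 0" using m_pos L_pos by simp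
qed

lemma step_size_sq_bound:
  fixes \<alpha> \<mu> L \<rho> :: real
  assumes "0 < \<alpha>" "0 < L" "\<alpha> \<le> (1 - \<rho>^2) * \<mu> / (8 * sqrt 30 * L^2)"
  shows "1920 * \<alpha>^2 * L^4 \<le> (1 - \<rho>^2)^2 * \<mu>^2"
proof -
  have "\<alpha> * (8 * sqrt 30 * L^2) \<le> (1 - \<rho>^2) * \<mu>"
    using assms by (simp add: le_divide_eq)
  moreover have "0 \<le> \<alpha> * (8 * sqrt 30 * L^2)" using assms by simp
  ultimately have "(\<alpha> * (8 * sqrt 30 * L^2))^2 \<le> ((1 - \<rho>^2) * \<mu>)^2" by (rule power_mono)
  moreover have "(\<alpha> * (8 * sqrt 30 * L^2))^2 = 1920 * \<alpha>^2 * L^4"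
    by (simp add: power_mult_distrib power2_eq_square power4_eq_xxxx)
  ultimately show ?thesis by (simp add: power_mult_distrib)
qed

theorem theorem2:
  fixes W :: "real^'n::finite^'n"
    and f :: "'n \<Rightarrow> nat \<Rightarrow> 'a::euclidean_space \<Rightarrow> real"
    and g :: "'n \<Rightarrow> nat \<Rightarrow> 'a \<Rightarrow> 'a"
    and m :: nat and \<mu> L \<alpha> :: real and xstar :: 'a and x0 :: "'n \<Rightarrow> 'a"
  assumes m_pos: "m \<ge> 1"
    and grad: "\<And>i l x. l < m \<Longrightarrow> (f i l has_derivative (\<lambda>h. g i l x \<bullet> h)) (at x)"
    and mu_pos: "0 < \<mu>" and mu_le_L: "\<mu> \<le> L"
    and sconv: "\<And>i l. l < m \<Longrightarrow> strongly_convex \<mu> (f i l)"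
    and lip: "\<And>i l. l < m \<Longrightarrow> L-lipschitz_on UNIV (g i l)"
    and W_nonneg: "\<And>i j. W$i$j \<ge> 0"
    and W_sym: "\<And>i j. W$i$j = W$j$i"
    and W_stoch: "\<And>i. (\<Sum>j\<in>UNIV. W$i$j) = 1"
    and W_conn: "mixing_graph_connected W"
    and xstar_min: "\<And>y. (1 / real CARD('n)) * (\<Sum>i\<in>UNIV. (1 / real m) * (\<Sum>l<m. f i l xstar))
                      \<le> (1 / real CARD('n)) * (\<Sum>i\<in>UNIV. (1 / real m) * (\<Sum>l<m. f i l y))"
    and alpha_pos: "0 < \<alpha>"
    and alpha1: "rho_w W = 0 \<or>
        \<alpha> \<le> sqrt ((2 - (rho_w W)^2) / (24 * (rho_w W)^2 * (5 - (rho_w W)^2))) * (1 - (rho_w W)^2) / L"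
    and alpha2: "\<alpha> \<le> (1 - (rho_w W)^2) / (2 * \<mu>)"
    and alpha3: "\<alpha> \<le> (1 - (rho_w W)^2) * \<mu> / (8 * sqrt 30 * L^2)"
  shows "let n = real CARD('n); \<rho> = rho_w W;
             \<sigma>2 = (1 / (real m * n)) * (\<Sum>i\<in>UNIV. \<Sum>l<m. (norm (g i l xstar))^2);
             \<omega> = 16 * \<alpha> * L^2 / (n * \<mu> * (1 - \<rho>^2));
             H0 = (norm (avg_pt x0 - xstar))^2 + \<omega> * consensus_err x0;
             X0h = H0 + 28 * (real m * \<mu> + L) * \<sigma>2 / (\<mu> * L^2);
             X1h = 30 * n * L^2 / (1 - \<rho>^2) * X0h + 15 * n * \<rho>^2 / (1 - \<rho>^2) * \<sigma>2
                   + real m * n * \<mu> * (1 - \<rho>^2) / (8 * L) * \<sigma>2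
         in \<forall>t. (1 / n) * (\<Sum>i\<in>UNIV. expect_sched m t
                      (\<lambda>\<sigma>. (norm (drr_iter W \<alpha> g m \<sigma> x0 t i - xstar))^2))
               \<le> (1 - \<alpha> * \<mu> / 4) ^ (m * t) * H0
                 + 4 * \<alpha>^2 / \<mu> * (real m * L + 240 * \<rho>^2 * L^2 / (\<mu> * (1 - \<rho>^2)^2)) * \<sigma>2
                 + ((1 + \<rho>^2) / 2) ^ (m * t) * consensus_err x0 / n
                 + 4 * X1h / (n * (1 - \<rho>^2)^2) * \<alpha>^2"
proof -
  have L_pos: "L > 0" using mu_pos mu_le_L by simp
  have "0 < (1 - (rho_w W)^2) / (2 * \<mu>)" using alpha_pos alpha2 by linarith
  then have rho_lt_1: "(rho_w W)^2 < 1" using mu_pos by (simp add: zero_less_divide_iff)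
  interpret drr_setting W f g m \<mu> L \<alpha> xstar
  proof
    show "\<alpha> * \<mu> \<le> (1 - (rho_w W)^2) / 2" using alpha2 mu_pos by (simp add: field_simps)
    show "1920 * \<alpha>^2 * L^4 \<le> (1 - (rho_w W)^2)^2 * \<mu>^2" by (rule step_size_sq_bound[OF alpha_pos L_pos alpha3])
    show "(\<Sum>i\<in>UNIV. \<Sum>l<m. g i l xstar) = 0" by (rule grad_sum_eq_0_at_minimiser[OF m_pos grad lip L_pos xstar_min])
  qed (use m_pos grad mu_pos mu_le_L sconv lip W_sym W_stoch alpha_pos rho_lt_1 in auto)
  show ?thesis
    using mean_sq_dist_bound[of _ x0] unfolding Let_def lyap0_eq n_def r_def sigma2_def by (simp add: add.assoc)
qed

end
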